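(* (i) Let $I$ be a set and $R\colon I\times I\to[0,1]$ a fuzzy equivalence. Then $([0,1]^I,g_R)$ is a monadic Pavelka algebra, where $[0,1]^I$ is the power of the standard Pavelka algebra. (ii) Let $(\mathbf A,\exists)$ be a monadic Pavelka algebra with $\mathbf A$ semisimple. Then there exist a set $I$, a fuzzy equivalence $R$ on $I$, and an injective homomorphism of Pavelka algebras $e\colon A\to[0,1]^I$ such that $e(\exists(x))=g_R(e(x))$ for all $x\in A$.
   Context: An MV-algebra $(A;\oplus,\neg,0)$ carries derived operations $1=\neg0$, $x\cdot y=\neg(\neg x\oplus\neg y)$, $x\rightarrow y=\neg x\oplus y$, lattice order $x\le y$ iff $\neg x\oplus y=1$. The standard MV-algebra is $[0,1]$ with $x\oplus y=\min\{x+y,1\}$, $\neg x=1-x$. A Pavelka algebra is $\mathbf A=(A;\oplus,\neg,\{\mathbf r\mid r\in[0,1]\cap\mathbb Q\})$ with $(A;\oplus,\neg,\mathbf 0)$ an MV-algebra, $\mathbf r\oplus\mathbf s=\mathbf t$ whenever $\min\{r+s,1\}=t$, $\neg\mathbf r=\mathbf s$ whenever $1-r=s$. The standard Pavelka algebra is $[0,1]$ with $\mathbf r$ interpreted as $r$; $[0,1]^I$ is its power. $\mathbf A$ is semisimple if its MV-reduct is a subdirect product of simple MV-algebras. A monadic Pavelka algebra is $(\mathbf A,\exists)$ with $\exists$ a closure operator (monotone, $x\le\exists x$, $\exists\exists x=\exists x$) such that $\exists(\neg\exists(x))=\neg\exists(x)$ and $\mathbf r\cdot\exists(x)=\exists(\mathbf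 r\cdot x)$ for all $x$ and constants $\mathbf r$. A fuzzy equivalence on $I$ is $R\colon I\times I\to[0,1]$ with $R(i,i)=1$, $R(i,j)=R(j,i)$, $R(i,j)\cdot R(j,k)\le R(i,k)$. For such $R$, $g_R\colon[0,1]^I\to[0,1]^I$, $g_R(x)(i)=\bigvee_{j\in I}(R(i,j)\cdot x(j))$. *)

theory Defs
  imports Complex_Main
begin

definition mv_algebra :: "'a set \<Rightarrow> ('a \<Rightarrow> 'a \<Rightarrow> 'a) \<Rightarrow> ('a \<Rightarrow> 'a) \<Rightarrow> 'a \<Rightarrow> bool" where
  "mv_algebra A pl ng z \<longleftrightarrow>
     z \<in> A \<and> (\<forall>x\<in>A. \<forall>y\<in>A. pl x y \<in> A) \<and> (\<forall>x\<in>A. ng x \<in> A) \<and>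
     (\<forall>x\<in>A. \<forall>y\<in>A. \<forall>w\<in>A. pl (pl x y) w = pl x (pl y w)) \<and>
     (\<forall>x\<in>A. \<forall>y\<in>A. pl x y = pl y x) \<and>
     (\<forall>x\<in>A. pl x z = x) \<and>
     (\<forall>x\<in>A. ng (ng x) = x) \<and>
     (\<forall>x\<in>A. pl x (ng z) = ng z) \<and>
     (\<forall>x\<in>A. \<forall>y\<in>A. pl (ng (pl (ng x) y)) y = pl (ng (pl (ng y) x)) x)"

definition mv_le :: "('a \<Rightarrow> 'a \<Rightarrow> 'a) \<Rightarrow> ('a \<Rightarrow> 'a) \<Rightarrow> 'a \<Rightarrow> 'a \<Rightarrow> 'a \<Rightarrow> bool" where
  "mv_le pl ng z x y \<longleftrightarrow> pl (ng x) y = ng z"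

definition mv_mult :: "('a \<Rightarrow> 'a \<Rightarrow> 'a) \<Rightarrow> ('a \<Rightarrow> 'a) \<Rightarrow> 'a \<Rightarrow> 'a \<Rightarrow> 'a" where
  "mv_mult pl ng x y = ng (pl (ng x) (ng y))"

definition mv_ideal :: "'a set \<Rightarrow> ('a \<Rightarrow> 'a \<Rightarrow> 'a) \<Rightarrow> ('a \<Rightarrow> 'a) \<Rightarrow> 'a \<Rightarrow> 'a set \<Rightarrow> bool" where
  "mv_ideal A pl ng z J \<longleftrightarrow> J \<subseteq> A \<and> z \<in> J \<and>
     (\<forall>x\<in>J. \<forall>y\<in>J. pl x y \<in> J) \<and>
     (\<forall>x\<in>J. \<forall>y\<in>A. mv_le pl ng z y x \<longrightarrow> y \<in> J)"

definition simple_mv :: "'a set \<Rightarrow> ('a \<Rightarrow> 'a \<Rightarrow> 'a) \<Rightarrow> ('a \<Rightarrow> 'a) \<Rightarrow> 'a \<Rightarrow> bool" where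
  "simple_mv A pl ng z \<longleftrightarrow> mv_algebra A pl ng z \<and> card {J. mv_ideal A pl ng z J} = 2"

definition mv_congruence :: "'a set \<Rightarrow> ('a \<Rightarrow> 'a \<Rightarrow> 'a) \<Rightarrow> ('a \<Rightarrow> 'a) \<Rightarrow> ('a \<times> 'a) set \<Rightarrow> bool" where
  "mv_congruence A pl ng \<theta> \<longleftrightarrow> equiv A \<theta> \<and>
     (\<forall>x x' y y'. (x, x') \<in> \<theta> \<and> (y, y') \<in> \<theta> \<longrightarrow> (pl x y, pl x' y') \<in> \<theta>) \<and>
     (\<forall>x x'. (x, x') \<in> \<theta> \<longrightarrow> (ng x, ng x') \<in> \<theta>)"

definition quot_plus :: "('a \<times> 'a) set \<Rightarrow> ('a \<Rightarrow> 'a \<Rightarrow> 'a) \<Rightarrow> 'a set \<Rightarrow> 'a set \<Rightarrow> 'a set" where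
  "quot_plus \<theta> pl X Y = \<theta> `` {pl (SOME x. x \<in> X) (SOME y. y \<in> Y)}"

definition quot_neg :: "('a \<times> 'a) set \<Rightarrow> ('a \<Rightarrow> 'a) \<Rightarrow> 'a set \<Rightarrow> 'a set" where
  "quot_neg \<theta> ng X = \<theta> `` {ng (SOME x. x \<in> X)}"

text \<open>Semisimple: the MV-reduct is a subdirect product of simple MV-algebras, i.e. there is
  a family of congruences with simple quotients whose intersection is the identity.\<close>
definition mv_semisimple :: "'a set \<Rightarrow> ('a \<Rightarrow> 'a \<Rightarrow> 'a) \<Rightarrow> ('a \<Rightarrow> 'a) \<Rightarrow> 'a \<Rightarrow> bool" where
  "mv_semisimple A pl ng z \<longleftrightarrow> mv_algebra A pl ng z \<and>
     (\<exists>\<Theta>. (\<forall>\<theta>\<in>\<Theta>. mv_congruence A pl ng \<theta> \<and>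
               simple_mv (A // \<theta>) (quot_plus \<theta> pl) (quot_neg \<theta> ng) (\<theta> `` {z})) \<and>
          (\<forall>x\<in>A. \<forall>y\<in>A. (\<forall>\<theta>\<in>\<Theta>. (x, y) \<in> \<theta>) \<longrightarrow> x = y))"

definition qunit :: "rat \<Rightarrow> bool" where
  "qunit r \<longleftrightarrow> 0 \<le> r \<and> r \<le> 1"

text \<open>Constants are given by c :: rat \<Rightarrow> 'a; only rationals in [0,1] matter.
  The zero of the MV-reduct is the constant c 0.\<close>
definition pavelka_algebra :: "'a set \<Rightarrow> ('a \<Rightarrow> 'a \<Rightarrow> 'a) \<Rightarrow> ('a \<Rightarrow> 'a) \<Rightarrow> (rat \<Rightarrow> 'a) \<Rightarrow> bool" where
  "pavelka_algebra A pl ng c \<longleftrightarrow> mv_algebra A pl ng (c 0) \<and>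
     (\<forall>r. qunit r \<longrightarrow> c r \<in> A) \<and>
     (\<forall>r s. qunit r \<and> qunit s \<longrightarrow> pl (c r) (c s) = c (min (r + s) 1)) \<and>
     (\<forall>r. qunit r \<longrightarrow> ng (c r) = c (1 - r))"

definition monadic_pavelka ::
  "'a set \<Rightarrow> ('a \<Rightarrow> 'a \<Rightarrow> 'a) \<Rightarrow> ('a \<Rightarrow> 'a) \<Rightarrow> (rat \<Rightarrow> 'a) \<Rightarrow> ('a \<Rightarrow> 'a) \<Rightarrow> bool" where
  "monadic_pavelka A pl ng c ex \<longleftrightarrow> pavelka_algebra A pl ng c \<and>
     (\<forall>x\<in>A. ex x \<in> A) \<and>
     (\<forall>x\<in>A. \<forall>y\<in>A. mv_le pl ng (c 0) x y \<longrightarrow> mv_le pl ng (c 0) (ex x) (ex y)) \<and>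
     (\<forall>x\<in>A. mv_le pl ng (c 0) x (ex x)) \<and>
     (\<forall>x\<in>A. ex (ex x) = ex x) \<and>
     (\<forall>x\<in>A. ex (ng (ex x)) = ng (ex x)) \<and>
     (\<forall>x\<in>A. \<forall>r. qunit r \<longrightarrow> mv_mult pl ng (c r) (ex x) = ex (mv_mult pl ng (c r) x))"

definition pavelka_hom ::
  "'a set \<Rightarrow> ('a \<Rightarrow> 'a \<Rightarrow> 'a) \<Rightarrow> ('a \<Rightarrow> 'a) \<Rightarrow> (rat \<Rightarrow> 'a) \<Rightarrow>
   'b set \<Rightarrow> ('b \<Rightarrow> 'b \<Rightarrow> 'b) \<Rightarrow> ('b \<Rightarrow> 'b) \<Rightarrow> (rat \<Rightarrow> 'b) \<Rightarrow> ('a \<Rightarrow> 'b) \<Rightarrow> bool" where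
  "pavelka_hom A pl ng c B plB ngB cB e \<longleftrightarrow>
     (\<forall>x\<in>A. e x \<in> B) \<and>
     (\<forall>x\<in>A. \<forall>y\<in>A. e (pl x y) = plB (e x) (e y)) \<and>
     (\<forall>x\<in>A. e (ng x) = ngB (e x)) \<and>
     (\<forall>r. qunit r \<longrightarrow> e (c r) = cB r)"

text \<open>Elements of [0,1]^I are functions on I, represented extensionally (value 0 outside I).\<close>
definition pow_carrier :: "'i set \<Rightarrow> ('i \<Rightarrow> real) set" where
  "pow_carrier I = {f. (\<forall>i\<in>I. 0 \<le> f i \<and> f i \<le> 1) \<and> (\<forall>i. i \<notin> I \<longrightarrow> f i = 0)}"

definition pow_plus :: "'i set \<Rightarrow> ('i \<Rightarrow> real) \<Rightarrow> ('i \<Rightarrow> real) \<Rightarrow> 'i \<Rightarrow> real" where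
  "pow_plus I f g = (\<lambda>i. if i \<in> I then min (f i + g i) 1 else 0)"

definition pow_neg :: "'i set \<Rightarrow> ('i \<Rightarrow> real) \<Rightarrow> 'i \<Rightarrow> real" where
  "pow_neg I f = (\<lambda>i. if i \<in> I then 1 - f i else 0)"

definition pow_const :: "'i set \<Rightarrow> rat \<Rightarrow> 'i \<Rightarrow> real" where
  "pow_const I r = (\<lambda>i. if i \<in> I then real_of_rat r else 0)"

text \<open>Product of the standard MV-algebra: x \<cdot> y = \<not>(\<not>x \<oplus> \<not>y).\<close>
definition std_mult :: "real \<Rightarrow> real \<Rightarrow> real" where
  "std_mult x y = 1 - min ((1 - x) + (1 - y)) 1"

definition fuzzy_equiv :: "'i set \<Rightarrow> ('i \<Rightarrow> 'i \<Rightarrow> real) \<Rightarrow> bool" where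
  "fuzzy_equiv I R \<longleftrightarrow>
     (\<forall>i\<in>I. \<forall>j\<in>I. 0 \<le> R i j \<and> R i j \<le> 1) \<and>
     (\<forall>i\<in>I. R i i = 1) \<and>
     (\<forall>i\<in>I. \<forall>j\<in>I. R i j = R j i) \<and>
     (\<forall>i\<in>I. \<forall>j\<in>I. \<forall>k\<in>I. std_mult (R i j) (R j k) \<le> R i k)"

definition g_R :: "'i set \<Rightarrow> ('i \<Rightarrow> 'i \<Rightarrow> real) \<Rightarrow> ('i \<Rightarrow> real) \<Rightarrow> 'i \<Rightarrow> real" where
  "g_R I R x = (\<lambda>i. if i \<in> I then (SUP j\<in>I. std_mult (R i j) (x j)) else 0)"

end

theory Submission
  imports Defs
begin

(* Part (i) is a direct computation in [0,1]^I: g_R is inflationary because R is reflexive,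
   idempotent because R is transitive (every g_R x is "R-closed"), it maps closed elements to
   closed elements under negation because R is symmetric, and it commutes with r \<cdot> _ because
   Lukasiewicz multiplication by a constant is monotone and residuated.

   Semisimplicity gives, via maximal ideals, a
   separating family of homomorphisms A \<rightarrow> [0,1]; the valuation attached to a maximal ideal M
   sends x to the supremum of the rationals r with r \<ominus> x \<in> M.  We index by the set Homs of
   ALL such homomorphisms, embed x \<mapsto> (k \<mapsto> k x), and put
       Rhom h k = min (Rdir h k) (Rdir k h),   Rdir h k = inf { k y \<rightarrow> h (\<exists>y) | y \<in> A }.
   Then g_R (e x) h \<le> h (\<exists>x) is immediate; the reverse inequality is the core of the proof:
   for every rational s < h (\<exists>x) a Zorn argument (witness_hom) produces k \<in> Homs with k x \<ge> s
   and Rhom h k \<ge> 1 - k x + s, whence Rhom h k \<cdot> k x \<ge> s. *)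

section \<open>Arithmetic of the standard MV-algebra\<close>

lemma std_mult_alt: "std_mult a b = max (a + b - 1) 0"
  unfolding std_mult_def by (simp add: min_def max_def)

lemma std_mult_comm: "std_mult a b = std_mult b a"
  unfolding std_mult_alt by (simp add: add.commute)

lemma std_mult_assoc:
  "0 \<le> a \<Longrightarrow> a \<le> 1 \<Longrightarrow> 0 \<le> b \<Longrightarrow> b \<le> 1 \<Longrightarrow> 0 \<le> d \<Longrightarrow> d \<le> 1 \<Longrightarrow>
   std_mult a (std_mult b d) = std_mult (std_mult a b) d"
  unfolding std_mult_alt by (simp add: max_def)

lemma std_mult_mono: "a \<le> a' \<Longrightarrow> b \<le> b' \<Longrightarrow> std_mult a b \<le> std_mult a' b'"
  unfolding std_mult_alt by simp

lemma std_mult_range: "a \<le> 1 \<Longrightarrow> 0 \<le> b \<Longrightarrow> b \<le> 1 \<Longrightarrow> 0 \<le> std_mult a b \<and> std_mult a b \<le> 1"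
  unfolding std_mult_alt by simp

lemma std_mult_one: "0 \<le> b \<Longrightarrow> std_mult 1 b = b"
  unfolding std_mult_alt by simp

lemma std_mult_nonneg: "0 \<le> std_mult a b"
  unfolding std_mult_alt by simp

definition std_imp :: "real \<Rightarrow> real \<Rightarrow> real" where
  "std_imp a b = min 1 (1 - a + b)"

lemma of_rat_min: "real_of_rat (min a b) = min (real_of_rat a) (real_of_rat b)"
  by (simp add: min_def of_rat_less_eq)

lemma of_rat_le_plus_inverse: "s \<le> r + 1 / of_nat n \<Longrightarrow> real_of_rat s \<le> real_of_rat r + 1 / real n"
proof -
  assume "s \<le> r + 1 / of_nat n"
  then have "real_of_rat s \<le> real_of_rat (r + 1 / of_nat n)" by (simp add: of_rat_less_eq)
  then show ?thesis by (simp add: of_rat_add of_rat_divide)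
qed

lemma qunit_of_rat: "0 \<le> real_of_rat r \<Longrightarrow> real_of_rat r \<le> 1 \<Longrightarrow> qunit r"
  unfolding qunit_def using of_rat_less_eq[of 0 r] of_rat_less_eq[of r 1] by simp

lemma eq_if_close:
  fixes a b :: real
  assumes close: "\<And>n::nat. n \<ge> 1 \<Longrightarrow> \<bar>a - b\<bar> \<le> 2 / real n"
  shows "a = b"
proof (rule ccontr)
  assume "a \<noteq> b"
  then have d: "\<bar>a - b\<bar> > 0" by simp
  obtain n :: nat where n: "2 / \<bar>a - b\<bar> < real n" using reals_Archimedean2 by blast
  then have n1: "n \<ge> 1" using d by (cases n) (auto simp: field_simps)
  have "2 < real n * \<bar>a - b\<bar>" using n d by (simp add: field_simps)
  moreover have "\<bar>a - b\<bar> * real n \<le> 2" using close[OF n1] n1 by (simp add: field_simps)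
  ultimately show False by (simp add: mult.commute)
qed

lemma le_if_below_rational_bounds:
  fixes t H :: real
  assumes H: "0 \<le> H" "H \<le> 1"
    and bound: "\<And>q. qunit q \<Longrightarrow> H \<le> real_of_rat q \<Longrightarrow> t \<le> real_of_rat q"
  shows "t \<le> H"
proof (rule ccontr)
  assume "\<not> t \<le> H"
  then have tH: "H < t" by simp
  show False
  proof (cases "H < 1")
    case True
    then have "H < min t 1" using tH by simp
    then obtain r where r: "H < real_of_rat r" "real_of_rat r < min t 1" using of_rat_dense by blast
    then have "qunit r" using H by (intro qunit_of_rat) linarith+
    then show False using bound r by force
  next
    case False
    then show False using H tH bound[of 1] by (simp add: qunit_def)
  qed
qed

section \<open>MV-algebras\<close>

locale mv_alg =
  fixes A :: "'a set" and pl :: "'a \<Rightarrow> 'a \<Rightarrow> 'a" (infixl "\<oplus>" 65)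
    and ng :: "'a \<Rightarrow> 'a" and z :: 'a
  assumes mv: "mv_algebra A pl ng z"
begin

lemma zA[simp]: "z \<in> A" using mv unfolding mv_algebra_def by blast
lemma plA[simp]: "x \<in> A \<Longrightarrow> y \<in> A \<Longrightarrow> x \<oplus> y \<in> A" using mv unfolding mv_algebra_def by blast
lemma ngA[simp]: "x \<in> A \<Longrightarrow> ng x \<in> A" using mv unfolding mv_algebra_def by blast
lemma assoc: "x \<in> A \<Longrightarrow> y \<in> A \<Longrightarrow> w \<in> A \<Longrightarrow> (x \<oplus> y) \<oplus> w = x \<oplus> (y \<oplus> w)"
  using mv unfolding mv_algebra_def by blast
lemma comm: "x \<in> A \<Longrightarrow> y \<in> A \<Longrightarrow> x \<oplus> y = y \<oplus> x"
  using mv unfolding mv_algebra_def by blast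
lemma pl_z[simp]: "x \<in> A \<Longrightarrow> x \<oplus> z = x" using mv unfolding mv_algebra_def by blast
lemma z_pl[simp]: "x \<in> A \<Longrightarrow> z \<oplus> x = x" using comm pl_z zA by metis
lemma dneg[simp]: "x \<in> A \<Longrightarrow> ng (ng x) = x" using mv unfolding mv_algebra_def by blast
lemma pl_one[simp]: "x \<in> A \<Longrightarrow> x \<oplus> ng z = ng z" using mv unfolding mv_algebra_def by blast
lemma one_pl[simp]: "x \<in> A \<Longrightarrow> ng z \<oplus> x = ng z" using comm pl_one zA ngA by metis
lemma join_sym_axiom: "x \<in> A \<Longrightarrow> y \<in> A \<Longrightarrow> ng (ng x \<oplus> y) \<oplus> y = ng (ng y \<oplus> x) \<oplus> x"
  using mv unfolding mv_algebra_def by blast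

lemma lcomm: "x \<in> A \<Longrightarrow> y \<in> A \<Longrightarrow> w \<in> A \<Longrightarrow> x \<oplus> (y \<oplus> w) = y \<oplus> (x \<oplus> w)"
  by (metis assoc comm)

lemmas ac = assoc comm lcomm

lemma ng_pl[simp]: "x \<in> A \<Longrightarrow> ng x \<oplus> x = ng z"
  using join_sym_axiom[of x "ng z"] by simp
lemma pl_ng[simp]: "x \<in> A \<Longrightarrow> x \<oplus> ng x = ng z" using comm ng_pl ngA by metis

definition le :: "'a \<Rightarrow> 'a \<Rightarrow> bool" where "le x y \<longleftrightarrow> ng x \<oplus> y = ng z"
definition dif :: "'a \<Rightarrow> 'a \<Rightarrow> 'a" where "dif x y = ng (ng x \<oplus> y)"
definition mult :: "'a \<Rightarrow> 'a \<Rightarrow> 'a" where "mult x y = ng (ng x \<oplus> ng y)"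
definition join :: "'a \<Rightarrow> 'a \<Rightarrow> 'a" where "join x y = dif x y \<oplus> y"
definition meet :: "'a \<Rightarrow> 'a \<Rightarrow> 'a" where "meet x y = ng (join (ng x) (ng y))"

lemma le_mv: "mv_le pl ng z = le" by (auto simp: fun_eq_iff mv_le_def le_def)
lemma mult_mv: "mv_mult pl ng = mult" by (auto simp: fun_eq_iff mv_mult_def mult_def)

lemma difA[simp]: "x \<in> A \<Longrightarrow> y \<in> A \<Longrightarrow> dif x y \<in> A" by (simp add: dif_def)
lemma multA[simp]: "x \<in> A \<Longrightarrow> y \<in> A \<Longrightarrow> mult x y \<in> A" by (simp add: mult_def)
lemma joinA[simp]: "x \<in> A \<Longrightarrow> y \<in> A \<Longrightarrow> join x y \<in> A" by (simp add: join_def)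
lemma meetA[simp]: "x \<in> A \<Longrightarrow> y \<in> A \<Longrightarrow> meet x y \<in> A" by (simp add: meet_def)

lemma le_refl[simp]: "x \<in> A \<Longrightarrow> le x x" by (simp add: le_def)

lemma le_decomp: "x \<in> A \<Longrightarrow> y \<in> A \<Longrightarrow> le x y \<Longrightarrow> y = x \<oplus> dif y x"
proof -
  assume x: "x \<in> A" and y: "y \<in> A" and l: "le x y"
  have "ng (ng y \<oplus> x) \<oplus> x = ng (ng x \<oplus> y) \<oplus> y" using join_sym_axiom[OF y x] .
  also have "\<dots> = y" using l x y by (simp add: le_def)
  finally show ?thesis using x y by (simp add: dif_def comm)
qed

lemma le_plus: "x \<in> A \<Longrightarrow> w \<in> A \<Longrightarrow> le x (x \<oplus> w)"
  unfolding le_def by (metis assoc ngA ng_pl one_pl)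

lemma le_ex: "x \<in> A \<Longrightarrow> y \<in> A \<Longrightarrow> le x y \<longleftrightarrow> (\<exists>w\<in>A. y = x \<oplus> w)"
  by (metis le_decomp le_plus difA)

lemma le_antisym: "x \<in> A \<Longrightarrow> y \<in> A \<Longrightarrow> le x y \<Longrightarrow> le y x \<Longrightarrow> x = y"
  using join_sym_axiom[of x y] by (simp add: le_def)

lemma le_trans: "x \<in> A \<Longrightarrow> y \<in> A \<Longrightarrow> w \<in> A \<Longrightarrow> le x y \<Longrightarrow> le y w \<Longrightarrow> le x w"
proof -
  assume x: "x \<in> A" and y: "y \<in> A" and w: "w \<in> A" and "le x y" "le y w"
  then obtain a b where a: "a \<in> A" "y = x \<oplus> a" and b: "b \<in> A" "w = y \<oplus> b" using le_ex by metis
  then have "w = x \<oplus> (a \<oplus> b)" using x by (simp add: assoc)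
  then show ?thesis using le_ex x w a b by (metis plA)
qed

lemma pl_mono: "x \<in> A \<Longrightarrow> y \<in> A \<Longrightarrow> w \<in> A \<Longrightarrow> le x y \<Longrightarrow> le (x \<oplus> w) (y \<oplus> w)"
proof -
  assume x: "x \<in> A" and y: "y \<in> A" and w: "w \<in> A" and "le x y"
  then obtain a where a: "a \<in> A" "y = x \<oplus> a" using le_ex by metis
  then have "y \<oplus> w = (x \<oplus> w) \<oplus> a" using x w by (simp add: ac)
  then show ?thesis using le_ex x w a y by (metis plA)
qed

lemma pl_mono2: "x \<in> A \<Longrightarrow> y \<in> A \<Longrightarrow> x' \<in> A \<Longrightarrow> y' \<in> A \<Longrightarrow> le x y \<Longrightarrow> le x' y' \<Longrightarrow> le (x \<oplus> x') (y \<oplus> y')"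
proof -
  assume a: "x \<in> A" "y \<in> A" "x' \<in> A" "y' \<in> A" "le x y" "le x' y'"
  have "le (x \<oplus> x') (y \<oplus> x')" using a pl_mono by simp
  moreover have "le (x' \<oplus> y) (y' \<oplus> y)" using a pl_mono by simp
  ultimately show ?thesis using a le_trans[of "x \<oplus> x'" "y \<oplus> x'" "y \<oplus> y'"] by (simp add: comm)
qed

lemma ng_anti: "x \<in> A \<Longrightarrow> y \<in> A \<Longrightarrow> le x y \<Longrightarrow> le (ng y) (ng x)"
  unfolding le_def by (simp add: comm)

lemma z_le[simp]: "x \<in> A \<Longrightarrow> le z x" by (simp add: le_def)
lemma le_one[simp]: "x \<in> A \<Longrightarrow> le x (ng z)" by (simp add: le_def)

lemma le_one_iff: "x \<in> A \<Longrightarrow> le (ng z) x \<longleftrightarrow> x = ng z"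
  using le_antisym[of x "ng z"] by auto
lemma le_z_iff: "x \<in> A \<Longrightarrow> le x z \<longleftrightarrow> x = z"
  using le_antisym[of x z] by auto

lemma resid: "a \<in> A \<Longrightarrow> x \<in> A \<Longrightarrow> c \<in> A \<Longrightarrow> le (dif a x) c \<longleftrightarrow> le a (x \<oplus> c)"
  unfolding le_def dif_def by (simp add: assoc)

lemma join_comm: "x \<in> A \<Longrightarrow> y \<in> A \<Longrightarrow> join x y = join y x"
  unfolding join_def dif_def using join_sym_axiom by simp

lemma join_ub2: "x \<in> A \<Longrightarrow> y \<in> A \<Longrightarrow> le y (join x y)"
  unfolding join_def using le_plus[of y "dif x y"] by (simp add: comm)
lemma join_ub1: "x \<in> A \<Longrightarrow> y \<in> A \<Longrightarrow> le x (join x y)"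
  using join_comm join_ub2 by metis

lemma join_least: "x \<in> A \<Longrightarrow> y \<in> A \<Longrightarrow> w \<in> A \<Longrightarrow> le x w \<Longrightarrow> le y w \<Longrightarrow> le (join x y) w"
proof -
  assume x: "x \<in> A" and y: "y \<in> A" and w: "w \<in> A" and xw: "le x w" and yw: "le y w"
  define p where "p = ng x \<oplus> y"
  define q where "q = ng w \<oplus> y"
  have pA: "p \<in> A" and qA: "q \<in> A" using x y w by (auto simp: p_def q_def)
  have qp: "le q p" unfolding p_def q_def using x y w xw ng_anti pl_mono by simp
  have "w = join w y" using join_comm[of w y] w y yw by (simp add: join_def dif_def le_def)
  then have wj: "w = ng q \<oplus> y" unfolding q_def by (simp add: join_def dif_def)
  have "ng (join x y) \<oplus> w = ng (ng p \<oplus> y) \<oplus> (y \<oplus> ng q)"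
    unfolding join_def dif_def p_def using wj x y w qA by (simp add: comm)
  also have "\<dots> = join p y \<oplus> ng q" unfolding join_def dif_def using pA qA y by (simp add: assoc)
  finally have e: "ng (join x y) \<oplus> w = join p y \<oplus> ng q" .
  have "le (p \<oplus> ng q) (join p y \<oplus> ng q)" using join_ub1 pA y qA pl_mono by simp
  moreover have "le (q \<oplus> ng q) (p \<oplus> ng q)" by (rule pl_mono) (use qA pA qp in auto)
  ultimately have "le (ng z) (join p y \<oplus> ng q)" using qA pA y
    using le_trans[of "ng z" "p \<oplus> ng q" "join p y \<oplus> ng q"] by simp
  then have "ng (join x y) \<oplus> w = ng z" using e le_one_iff pA qA y by simp
  then show ?thesis unfolding le_def .
qed

lemma meet_comm: "x \<in> A \<Longrightarrow> y \<in> A \<Longrightarrow> meet x y = meet y x"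
  unfolding meet_def using join_comm by simp
lemma meet_lb1: "x \<in> A \<Longrightarrow> y \<in> A \<Longrightarrow> le (meet x y) x"
  unfolding meet_def using join_ub1[of "ng x" "ng y"] ng_anti[of "ng x" "join (ng x) (ng y)"] by simp
lemma meet_lb2: "x \<in> A \<Longrightarrow> y \<in> A \<Longrightarrow> le (meet x y) y"
  using meet_comm meet_lb1 by metis
lemma meet_greatest: "x \<in> A \<Longrightarrow> y \<in> A \<Longrightarrow> w \<in> A \<Longrightarrow> le w x \<Longrightarrow> le w y \<Longrightarrow> le w (meet x y)"
proof -
  assume a: "x \<in> A" "y \<in> A" "w \<in> A" "le w x" "le w y"
  have "le (join (ng x) (ng y)) (ng w)" using a join_least ng_anti by simp
  then show ?thesis unfolding meet_def using a ng_anti[of "join (ng x) (ng y)" "ng w"] by simp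
qed

lemma meet_eq: "x \<in> A \<Longrightarrow> y \<in> A \<Longrightarrow> le x y \<Longrightarrow> meet x y = x"
  by (meson meetA meet_greatest meet_lb1 le_antisym le_refl)
lemma meet_one[simp]: "x \<in> A \<Longrightarrow> meet (ng z) x = x"
  using meet_comm meet_eq le_one by (metis ngA zA)
lemma meet_zero[simp]: "x \<in> A \<Longrightarrow> meet z x = z"
  using meet_eq z_le by simp

lemma join_meet: "x \<in> A \<Longrightarrow> y \<in> A \<Longrightarrow> join x y = ng (meet (ng x) (ng y))"
  unfolding meet_def by simp

lemma meet_mono: "x \<in> A \<Longrightarrow> y \<in> A \<Longrightarrow> x' \<in> A \<Longrightarrow> y' \<in> A \<Longrightarrow> le x x' \<Longrightarrow> le y y' \<Longrightarrow> le (meet x y) (meet x' y')"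
  by (meson le_trans meetA meet_greatest meet_lb1 meet_lb2)
lemma join_mono: "x \<in> A \<Longrightarrow> y \<in> A \<Longrightarrow> x' \<in> A \<Longrightarrow> y' \<in> A \<Longrightarrow> le x x' \<Longrightarrow> le y y' \<Longrightarrow> le (join x y) (join x' y')"
  by (meson le_trans joinA join_least join_ub1 join_ub2)

lemma dist: "x \<in> A \<Longrightarrow> y \<in> A \<Longrightarrow> w \<in> A \<Longrightarrow> x \<oplus> meet y w = meet (x \<oplus> y) (x \<oplus> w)"
proof -
  assume a: "x \<in> A" "y \<in> A" "w \<in> A"
  define m where "m = meet (x \<oplus> y) (x \<oplus> w)"
  have mA: "m \<in> A" using a by (simp add: m_def)
  have 1: "le (x \<oplus> meet y w) m" unfolding m_def using a
    by (simp add: meet_greatest pl_mono meet_lb1 meet_lb2 comm[of x])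
  have "le (dif m x) y" using resid a mA meet_lb1 m_def by simp
  moreover have "le (dif m x) w" using resid a mA meet_lb2 m_def by simp
  ultimately have "le (dif m x) (meet y w)" using meet_greatest a mA by simp
  then have "le m (x \<oplus> meet y w)" using resid a mA by simp
  then show ?thesis using 1 le_antisym a mA m_def by simp
qed

lemma dif_mult: "x \<in> A \<Longrightarrow> y \<in> A \<Longrightarrow> dif x y = mult x (ng y)"
  by (simp add: dif_def mult_def)
lemma mv_mult_mono: "a \<in> A \<Longrightarrow> b \<in> A \<Longrightarrow> w \<in> A \<Longrightarrow> le a b \<Longrightarrow> le (mult a w) (mult b w)"
  unfolding mult_def using ng_anti pl_mono by simp

lemma mult_comm: "x \<in> A \<Longrightarrow> y \<in> A \<Longrightarrow> mult x y = mult y x"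
  by (simp add: mult_def comm)
lemma dif_self[simp]: "x \<in> A \<Longrightarrow> dif x x = z" by (simp add: dif_def)
lemma dif_z[simp]: "x \<in> A \<Longrightarrow> dif x z = x" by (simp add: dif_def)
lemma z_dif[simp]: "x \<in> A \<Longrightarrow> dif z x = z" by (simp add: dif_def)
lemma meet_formula: "x \<in> A \<Longrightarrow> y \<in> A \<Longrightarrow> meet x y = ng (ng x \<oplus> ng (ng x \<oplus> y))"
proof -
  assume a: "x \<in> A" "y \<in> A"
  have "meet x y = ng (join (ng y) (ng x))" unfolding meet_def using join_comm a by simp
  also have "\<dots> = ng (ng (y \<oplus> ng x) \<oplus> ng x)" by (simp add: join_def dif_def a)
  also have "\<dots> = ng (ng x \<oplus> ng (ng x \<oplus> y))" using a by (simp add: comm)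
  finally show ?thesis .
qed

lemma dif_meet: "p \<in> A \<Longrightarrow> a \<in> A \<Longrightarrow> dif p (meet p a) = dif p a"
proof -
  assume h: "p \<in> A" "a \<in> A"
  have "ng p \<oplus> meet p a = meet (ng p \<oplus> p) (ng p \<oplus> a)" using dist h by simp
  also have "\<dots> = ng p \<oplus> a" using h by simp
  finally show ?thesis by (simp add: dif_def)
qed

lemma meet_z_dif: "p \<in> A \<Longrightarrow> a \<in> A \<Longrightarrow> meet p a = z \<Longrightarrow> dif p a = p"
  using dif_meet by (metis dif_z)

lemma sum_absorbs_mult: "s \<in> A \<Longrightarrow> t \<in> A \<Longrightarrow> s \<oplus> t \<oplus> mult s t = s \<oplus> t"
proof -
  assume h: "s \<in> A" "t \<in> A"
  define m where "m = meet t (ng s)"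
  have mA: "m \<in> A" using h by (simp add: m_def)
  have "t = m \<oplus> dif t m" using le_decomp[of m t] meet_lb1 h mA m_def by simp
  also have "dif t m = mult s t" using dif_meet[of t "ng s"] h m_def by (simp add: dif_mult mult_comm)
  finally have t: "t = m \<oplus> mult s t" .
  have sm: "s \<oplus> m = s \<oplus> t" unfolding m_def using dist[of s t "ng s"] h by (simp add: meet_comm)
  have "s \<oplus> t = s \<oplus> (m \<oplus> mult s t)" using t by simp
  also have "\<dots> = (s \<oplus> m) \<oplus> mult s t" using h mA by (simp add: assoc)
  finally show ?thesis using sm by simp
qed

text \<open>Prelinearity: (x \<ominus> y) \<and> (y \<ominus> x) = 0.  It makes the order linear modulo a maximal ideal.\<close>
lemma prelinearity: "x \<in> A \<Longrightarrow> y \<in> A \<Longrightarrow> meet (dif x y) (dif y x) = z"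
proof -
  assume h: "x \<in> A" "y \<in> A"
  have na: "ng (dif x y) = ng x \<oplus> y" using h by (simp add: dif_def)
  have "ng (dif x y) \<oplus> dif y x = ng x \<oplus> y \<oplus> mult (ng x) y"
    using na h by (simp add: dif_def mult_def comm)
  also have "\<dots> = ng (dif x y)" using sum_absorbs_mult[of "ng x" y] h na by simp
  finally have e: "ng (dif x y) \<oplus> dif y x = ng (dif x y)" .
  show ?thesis using h by (simp add: meet_formula e)
qed

lemma meet_zero_sum: "a \<in> A \<Longrightarrow> b \<in> A \<Longrightarrow> c \<in> A \<Longrightarrow> meet a b = z \<Longrightarrow> meet c b = z \<Longrightarrow> meet (a \<oplus> c) b = z"
proof -
  assume h: "a \<in> A" "b \<in> A" "c \<in> A" "meet a b = z" "meet c b = z"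
  define b' where "b' = meet (a \<oplus> c) b"
  have bA: "b' \<in> A" using h by (simp add: b'_def)
  have "le b' b" using meet_lb2 h b'_def by simp
  then have "le (meet b' a) (meet b a)" using meet_mono[of b' a b a] h bA by simp
  then have "meet b' a = z" using h bA meet_comm le_z_iff by simp
  then have d: "dif b' a = b'" using meet_z_dif h bA by simp
  have "le b' (a \<oplus> c)" using meet_lb1 h b'_def by simp
  then have "le b' c" using resid[of b' a c] d h bA by simp
  moreover have "le b' b" using meet_lb2 h b'_def by simp
  ultimately have "le b' (meet c b)" using meet_greatest[of c b b'] h bA by blast
  then show ?thesis using h bA le_z_iff b'_def by simp
qed

fun nsum :: "nat \<Rightarrow> 'a \<Rightarrow> 'a" where
  "nsum 0 x = z" | "nsum (Suc n) x = x \<oplus> nsum n x"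

lemma nsumA[simp]: "x \<in> A \<Longrightarrow> nsum n x \<in> A" by (induction n) auto

lemma nsum_add: "x \<in> A \<Longrightarrow> nsum (m + n) x = nsum m x \<oplus> nsum n x"
  by (induction m) (auto simp: assoc)

lemma nsum_mono: "x \<in> A \<Longrightarrow> y \<in> A \<Longrightarrow> le x y \<Longrightarrow> le (nsum n x) (nsum n y)"
  by (induction n) (auto intro: pl_mono2)

lemma nsum_meet_z: "a \<in> A \<Longrightarrow> b \<in> A \<Longrightarrow> meet a b = z \<Longrightarrow> meet (nsum n a) b = z"
proof (induction n)
  case 0 then show ?case by simp
next
  case (Suc n) then show ?case using meet_zero_sum[of a b "nsum n a"] by simp
qed

lemma nsum_meet_z2: "a \<in> A \<Longrightarrow> b \<in> A \<Longrightarrow> meet a b = z \<Longrightarrow> meet (nsum n a) (nsum m b) = z"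
  using nsum_meet_z meet_comm by (metis nsumA)

lemma join_le_pl: "a \<in> A \<Longrightarrow> b \<in> A \<Longrightarrow> le (join a b) (a \<oplus> b)"
  using join_least le_plus[of a b] le_plus[of b a] by (simp add: comm)

lemma meet_z_join: "a \<in> A \<Longrightarrow> b \<in> A \<Longrightarrow> meet a b = z \<Longrightarrow> join (ng a) (ng b) = ng z"
  unfolding meet_def using dneg by (metis joinA ngA)

lemma dif_tri: "x \<in> A \<Longrightarrow> y \<in> A \<Longrightarrow> w \<in> A \<Longrightarrow> le (dif x w) (dif x y \<oplus> dif y w)"
proof -
  assume h: "x \<in> A" "y \<in> A" "w \<in> A"
  have 1: "le x (y \<oplus> dif x y)" using resid[of x y "dif x y"] h by simp
  have 2: "le y (w \<oplus> dif y w)" using resid[of y w "dif y w"] h by simp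
  have "le (y \<oplus> dif x y) ((w \<oplus> dif y w) \<oplus> dif x y)" using pl_mono 2 h by simp
  then have "le x ((w \<oplus> dif y w) \<oplus> dif x y)" using le_trans 1 h by (meson plA difA)
  then have "le x (w \<oplus> (dif x y \<oplus> dif y w))" using h by (simp add: ac)
  then show ?thesis using resid h by simp
qed

lemma dif_pl2: "a \<in> A \<Longrightarrow> b \<in> A \<Longrightarrow> x \<in> A \<Longrightarrow> y \<in> A \<Longrightarrow> le (dif (a \<oplus> b) (x \<oplus> y)) (dif a x \<oplus> dif b y)"
proof -
  assume h: "a \<in> A" "b \<in> A" "x \<in> A" "y \<in> A"
  have 1: "le a (x \<oplus> dif a x)" using resid[of a x "dif a x"] h by simp
  have 2: "le b (y \<oplus> dif b y)" using resid[of b y "dif b y"] h by simp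
  have "le (a \<oplus> b) ((x \<oplus> dif a x) \<oplus> (y \<oplus> dif b y))" using pl_mono2 1 2 h by simp
  then have "le (a \<oplus> b) ((x \<oplus> y) \<oplus> (dif a x \<oplus> dif b y))" using h by (simp add: ac)
  then show ?thesis using resid h by simp
qed

lemma pl4: "a \<in> A \<Longrightarrow> b \<in> A \<Longrightarrow> c \<in> A \<Longrightarrow> d \<in> A \<Longrightarrow> (a \<oplus> b) \<oplus> (c \<oplus> d) = (a \<oplus> c) \<oplus> (b \<oplus> d)"
proof -
  assume h: "a \<in> A" "b \<in> A" "c \<in> A" "d \<in> A"
  have "(a \<oplus> b) \<oplus> (c \<oplus> d) = a \<oplus> (b \<oplus> (c \<oplus> d))" using h assoc by simp
  also have "b \<oplus> (c \<oplus> d) = c \<oplus> (b \<oplus> d)" using h lcomm by simp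
  also have "a \<oplus> (c \<oplus> (b \<oplus> d)) = (a \<oplus> c) \<oplus> (b \<oplus> d)" using h assoc by simp
  finally show ?thesis .
qed

lemma dif_ng: "x \<in> A \<Longrightarrow> y \<in> A \<Longrightarrow> dif (ng y) (ng x) = dif x y"
  by (simp add: dif_def comm)

end

section \<open>Ideals and maximal ideals\<close>

context mv_alg
begin

lemma ideal_iff: "mv_ideal A pl ng z J \<longleftrightarrow> J \<subseteq> A \<and> z \<in> J \<and> (\<forall>x\<in>J. \<forall>y\<in>J. x \<oplus> y \<in> J) \<and>
     (\<forall>x\<in>J. \<forall>y\<in>A. le y x \<longrightarrow> y \<in> J)"
  unfolding mv_ideal_def le_mv ..

definition max_ideal :: "'a set \<Rightarrow> bool" where
  "max_ideal M \<longleftrightarrow> mv_ideal A pl ng z M \<and> ng z \<notin> M \<and>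
     (\<forall>J. mv_ideal A pl ng z J \<and> M \<subseteq> J \<and> ng z \<notin> J \<longrightarrow> J = M)"

lemma ideal_le: "mv_ideal A pl ng z J \<Longrightarrow> x \<in> J \<Longrightarrow> y \<in> A \<Longrightarrow> le y x \<Longrightarrow> y \<in> J"
  unfolding ideal_iff by blast
lemma ideal_pl: "mv_ideal A pl ng z J \<Longrightarrow> x \<in> J \<Longrightarrow> y \<in> J \<Longrightarrow> x \<oplus> y \<in> J"
  unfolding ideal_iff by blast
lemma ideal_z: "mv_ideal A pl ng z J \<Longrightarrow> z \<in> J"
  unfolding ideal_iff by blast
lemma ideal_sub: "mv_ideal A pl ng z J \<Longrightarrow> x \<in> J \<Longrightarrow> x \<in> A"
  unfolding ideal_iff by blast

definition ideal_extend :: "'a set \<Rightarrow> 'a \<Rightarrow> 'a set" where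
  "ideal_extend M x = {w\<in>A. \<exists>m\<in>M. \<exists>n. le w (m \<oplus> nsum n x)}"

lemma ideal_extend_ideal:
  assumes I: "mv_ideal A pl ng z M" and x: "x \<in> A"
  shows "mv_ideal A pl ng z (ideal_extend M x)"
  unfolding ideal_iff
proof (intro conjI ballI impI)
  have MA: "M \<subseteq> A" using I unfolding ideal_iff by blast
  show "ideal_extend M x \<subseteq> A" unfolding ideal_extend_def by blast
  show "z \<in> ideal_extend M x" unfolding ideal_extend_def using ideal_z[OF I]
    by (auto intro!: bexI[of _ z] exI[of _ 0])
  fix u v assume "u \<in> ideal_extend M x" "v \<in> ideal_extend M x"
  then obtain m1 n1 m2 n2 where u: "u \<in> A" "m1 \<in> M" "le u (m1 \<oplus> nsum n1 x)"
    and v: "v \<in> A" "m2 \<in> M" "le v (m2 \<oplus> nsum n2 x)" unfolding ideal_extend_def by blast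
  have mA: "m1 \<in> A" "m2 \<in> A" using u v MA by auto
  have "le (u \<oplus> v) ((m1 \<oplus> nsum n1 x) \<oplus> (m2 \<oplus> nsum n2 x))" using pl_mono2 u v mA x by simp
  also have "(m1 \<oplus> nsum n1 x) \<oplus> (m2 \<oplus> nsum n2 x) = (m1 \<oplus> m2) \<oplus> nsum (n1 + n2) x"
    using mA x by (simp add: nsum_add pl4)
  finally have "le (u \<oplus> v) ((m1 \<oplus> m2) \<oplus> nsum (n1 + n2) x)" .
  moreover have "m1 \<oplus> m2 \<in> M" using ideal_pl I u v by blast
  ultimately show "u \<oplus> v \<in> ideal_extend M x" unfolding ideal_extend_def using u v plA[of u v] by blast
next
  have MA: "M \<subseteq> A" using I unfolding ideal_iff by blast
  fix u w assume "u \<in> ideal_extend M x" "w \<in> A" "le w u"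
  then obtain m n where u: "u \<in> A" "m \<in> M" "le u (m \<oplus> nsum n x)" unfolding ideal_extend_def by blast
  then have "le w (m \<oplus> nsum n x)"
    using le_trans[of w u "m \<oplus> nsum n x"] \<open>le w u\<close> \<open>w \<in> A\<close> MA x by auto
  then show "w \<in> ideal_extend M x" unfolding ideal_extend_def using \<open>w \<in> A\<close> u by blast
qed

lemma ideal_extend_contains:
  assumes I: "mv_ideal A pl ng z M" and x: "x \<in> A"
  shows "M \<subseteq> ideal_extend M x" and "x \<in> ideal_extend M x"
proof -
  show "M \<subseteq> ideal_extend M x"
  proof
    fix m assume m: "m \<in> M"
    then have mA: "m \<in> A" using ideal_sub[OF I] by blast
    then have "le m (m \<oplus> nsum 0 x)" by simp
    then show "m \<in> ideal_extend M x" unfolding ideal_extend_def using m mA by blast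
  qed
  show "x \<in> ideal_extend M x" unfolding ideal_extend_def using x ideal_z[OF I]
    by (auto intro!: bexI[of _ z] exI[of _ 1])
qed

text \<open>Maximal ideals are archimedean: if x \<notin> M then some negated multiple \<not>(n x) lies in M.
  Hence the quotient by M embeds into [0,1].\<close>
lemma max_ideal_archimedean:
  assumes M: "max_ideal M" and x: "x \<in> A" "x \<notin> M"
  shows "\<exists>n. ng (nsum n x) \<in> M"
proof -
  have I: "mv_ideal A pl ng z M" using M unfolding max_ideal_def by blast
  have "ng z \<in> ideal_extend M x"
  proof (rule ccontr)
    assume "ng z \<notin> ideal_extend M x"
    then have "ideal_extend M x = M"
      using M ideal_extend_ideal[OF I x(1)] ideal_extend_contains[OF I x(1)] unfolding max_ideal_def by blast
    then show False using ideal_extend_contains(2)[OF I x(1)] x(2) by blast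
  qed
  then obtain m n where mn: "m \<in> M" "le (ng z) (m \<oplus> nsum n x)" unfolding ideal_extend_def by blast
  have mA: "m \<in> A" using mn ideal_sub[OF I] by auto
  then have "m \<oplus> nsum n x = ng z" using mn le_one_iff x by simp
  then have "le (ng (nsum n x)) m" using mA x by (simp add: le_def comm)
  then show ?thesis using ideal_le[OF I mn(1), of "ng (nsum n x)"] x by auto
qed

text \<open>Modulo a maximal ideal any two elements are comparable; the proof combines
  archimedeanity with prelinearity.\<close>
lemma max_ideal_linear: "max_ideal M \<Longrightarrow> x \<in> A \<Longrightarrow> y \<in> A \<Longrightarrow> dif x y \<in> M \<or> dif y x \<in> M"
proof (rule ccontr)
  assume M: "max_ideal M" and h: "x \<in> A" "y \<in> A" and nc: "\<not> (dif x y \<in> M \<or> dif y x \<in> M)"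
  have I: "mv_ideal A pl ng z M" using M unfolding max_ideal_def by blast
  have nc1: "dif x y \<notin> M" and nc2: "dif y x \<notin> M" using nc by auto
  obtain n where n: "ng (nsum n (dif x y)) \<in> M" using max_ideal_archimedean[OF M _ nc1] h by auto
  obtain m where m: "ng (nsum m (dif y x)) \<in> M" using max_ideal_archimedean[OF M _ nc2] h by auto
  have "meet (dif x y) (dif y x) = z" using prelinearity h by simp
  then have "meet (nsum n (dif x y)) (nsum m (dif y x)) = z" using nsum_meet_z2[of "dif x y" "dif y x"] h by simp
  then have j: "join (ng (nsum n (dif x y))) (ng (nsum m (dif y x))) = ng z" using meet_z_join h by simp
  have s: "ng (nsum n (dif x y)) \<oplus> ng (nsum m (dif y x)) \<in> M" using ideal_pl[OF I n m] .
  have "le (ng z) (ng (nsum n (dif x y)) \<oplus> ng (nsum m (dif y x)))"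
    using join_le_pl[of "ng (nsum n (dif x y))" "ng (nsum m (dif y x))"] j h by simp
  then have "ng z \<in> M" using ideal_le[OF I s, of "ng z"] by simp
  then show False using M unfolding max_ideal_def by blast
qed

lemma ideal_union_chain:
  assumes "C \<noteq> {}" and ch: "\<forall>K\<in>C. mv_ideal A pl ng z K \<and> ng z \<notin> K"
    and lin: "\<forall>K1\<in>C. \<forall>K2\<in>C. K1 \<subseteq> K2 \<or> K2 \<subseteq> K1"
  shows "mv_ideal A pl ng z (\<Union>C) \<and> ng z \<notin> \<Union>C"
proof -
  have IK: "\<And>K. K \<in> C \<Longrightarrow> mv_ideal A pl ng z K" using ch by simp
  have "mv_ideal A pl ng z (\<Union>C)"
    unfolding ideal_iff
  proof (intro conjI ballI impI)
    show "\<Union>C \<subseteq> A" using IK ideal_sub by auto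
    obtain K where K: "K \<in> C" using assms(1) by blast
    then have "z \<in> K" using IK ideal_z by simp
    then show "z \<in> \<Union>C" using K by blast
  next
    fix x y assume "x \<in> \<Union>C" "y \<in> \<Union>C"
    then obtain K1 K2 where K: "K1 \<in> C" "K2 \<in> C" "x \<in> K1" "y \<in> K2" by blast
    show "x \<oplus> y \<in> \<Union>C"
    proof (cases "K1 \<subseteq> K2")
      case True
      then have "x \<in> K2" using K by auto
      then have "x \<oplus> y \<in> K2" using K IK[of K2] ideal_pl by simp
      then show ?thesis using K by blast
    next
      case False
      then have "K2 \<subseteq> K1" using lin K by blast
      then have "y \<in> K1" using K by auto
      then have "x \<oplus> y \<in> K1" using K IK[of K1] ideal_pl by simp
      then show ?thesis using K by blast
    qed
  next
    fix x y assume "x \<in> \<Union>C" "y \<in> A" "le y x"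
    then obtain K where K: "K \<in> C" "x \<in> K" by blast
    then have "y \<in> K" using IK[of K] ideal_le \<open>y \<in> A\<close> \<open>le y x\<close> by simp
    then show "y \<in> \<Union>C" using K by blast
  qed
  moreover have "ng z \<notin> \<Union>C" using ch by blast
  ultimately show ?thesis by blast
qed

lemma max_ideal_exists:
  assumes J: "mv_ideal A pl ng z J" "ng z \<notin> J"
  shows "\<exists>M. max_ideal M \<and> J \<subseteq> M"
proof -
  define S where "S = {K. mv_ideal A pl ng z K \<and> ng z \<notin> K \<and> J \<subseteq> K}"
  have "\<exists>M\<in>S. \<forall>X\<in>S. M \<subseteq> X \<longrightarrow> X = M"
  proof (rule subset_Zorn_nonempty)
    show "S \<noteq> {}" using J unfolding S_def by blast
  next
    fix C assume C: "C \<noteq> {}" "subset.chain S C"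
    then have "C \<subseteq> S" and lin: "\<forall>K1\<in>C. \<forall>K2\<in>C. K1 \<subseteq> K2 \<or> K2 \<subseteq> K1"
      unfolding subset.chain_def by auto
    then have "mv_ideal A pl ng z (\<Union>C) \<and> ng z \<notin> \<Union>C"
      using ideal_union_chain[OF C(1)] unfolding S_def by blast
    moreover have "J \<subseteq> \<Union>C" using C(1) \<open>C \<subseteq> S\<close> unfolding S_def by blast
    ultimately show "\<Union>C \<in> S" unfolding S_def by blast
  qed
  then obtain M where M: "M \<in> S" "\<forall>X\<in>S. M \<subseteq> X \<longrightarrow> X = M" by blast
  have "max_ideal M" unfolding max_ideal_def using M unfolding S_def by blast
  then show ?thesis using M unfolding S_def by blast
qed

end

section \<open>Congruences with simple quotients\<close>

text \<open>Semisimplicity is defined through congruences; we translate it into maximal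
  ideals: the kernel of a congruence with simple quotient is a maximal ideal.\<close>

context mv_alg
begin

lemma cong_equiv: "mv_congruence A pl ng \<theta> \<Longrightarrow> equiv A \<theta>" unfolding mv_congruence_def by blast
lemma cong_pl: "mv_congruence A pl ng \<theta> \<Longrightarrow> (x, x') \<in> \<theta> \<Longrightarrow> (y, y') \<in> \<theta> \<Longrightarrow> (x \<oplus> y, x' \<oplus> y') \<in> \<theta>"
  unfolding mv_congruence_def by blast
lemma cong_ng: "mv_congruence A pl ng \<theta> \<Longrightarrow> (x, x') \<in> \<theta> \<Longrightarrow> (ng x, ng x') \<in> \<theta>"
  unfolding mv_congruence_def by blast
lemma cong_refl: "mv_congruence A pl ng \<theta> \<Longrightarrow> x \<in> A \<Longrightarrow> (x, x) \<in> \<theta>"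
  using cong_equiv unfolding equiv_def refl_on_def by blast
lemma cong_sym: "mv_congruence A pl ng \<theta> \<Longrightarrow> (x, y) \<in> \<theta> \<Longrightarrow> (y, x) \<in> \<theta>"
  using cong_equiv unfolding equiv_def sym_def by blast
lemma cong_trans: "mv_congruence A pl ng \<theta> \<Longrightarrow> (x, y) \<in> \<theta> \<Longrightarrow> (y, w) \<in> \<theta> \<Longrightarrow> (x, w) \<in> \<theta>"
  using cong_equiv unfolding equiv_def trans_def by blast

lemma class_some: "mv_congruence A pl ng \<theta> \<Longrightarrow> a \<in> A \<Longrightarrow> (a, SOME x. x \<in> \<theta> `` {a}) \<in> \<theta>"
proof -
  assume h: "mv_congruence A pl ng \<theta>" "a \<in> A"
  have "a \<in> \<theta> `` {a}" using cong_refl[OF h] by simp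
  then have "(SOME x. x \<in> \<theta> `` {a}) \<in> \<theta> `` {a}" by (rule someI)
  then show ?thesis by simp
qed

lemma class_eq: "mv_congruence A pl ng \<theta> \<Longrightarrow> (a, b) \<in> \<theta> \<Longrightarrow> \<theta> `` {a} = \<theta> `` {b}"
  by (rule equiv_class_eq[OF cong_equiv])

lemma class_eq_iff: "mv_congruence A pl ng \<theta> \<Longrightarrow> a \<in> A \<Longrightarrow> b \<in> A \<Longrightarrow> \<theta> `` {a} = \<theta> `` {b} \<longleftrightarrow> (a, b) \<in> \<theta>"
  by (rule eq_equiv_class_iff[OF cong_equiv])

lemma quot_plus_class: "mv_congruence A pl ng \<theta> \<Longrightarrow> a \<in> A \<Longrightarrow> b \<in> A \<Longrightarrow>
    quot_plus \<theta> pl (\<theta> `` {a}) (\<theta> `` {b}) = \<theta> `` {a \<oplus> b}"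
proof -
  assume C: "mv_congruence A pl ng \<theta>" and h: "a \<in> A" "b \<in> A"
  have 1: "((SOME x. x \<in> \<theta> `` {a}), a) \<in> \<theta>" using cong_sym[OF C class_some[OF C h(1)]] .
  have 2: "((SOME x. x \<in> \<theta> `` {b}), b) \<in> \<theta>" using cong_sym[OF C class_some[OF C h(2)]] .
  show ?thesis unfolding quot_plus_def using class_eq[OF C cong_pl[OF C 1 2]] .
qed

lemma quot_neg_class: "mv_congruence A pl ng \<theta> \<Longrightarrow> a \<in> A \<Longrightarrow>
    quot_neg \<theta> ng (\<theta> `` {a}) = \<theta> `` {ng a}"
proof -
  assume C: "mv_congruence A pl ng \<theta>" and h: "a \<in> A"
  have 1: "((SOME x. x \<in> \<theta> `` {a}), a) \<in> \<theta>" using cong_sym[OF C class_some[OF C h(1)]] .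
  show ?thesis unfolding quot_neg_def using class_eq[OF C cong_ng[OF C 1]] .
qed

definition cong_ker :: "('a \<times> 'a) set \<Rightarrow> 'a set" where "cong_ker \<theta> = {x \<in> A. (x, z) \<in> \<theta>}"

text \<open>The kernel is an ideal; downward closure uses y = x \<and> y, written with \<oplus> and \<not>.\<close>
lemma cong_ker_ideal: "mv_congruence A pl ng \<theta> \<Longrightarrow> mv_ideal A pl ng z (cong_ker \<theta>)"
  unfolding ideal_iff
proof (intro conjI ballI impI)
  assume C: "mv_congruence A pl ng \<theta>"
  show "cong_ker \<theta> \<subseteq> A" unfolding cong_ker_def by blast
  show "z \<in> cong_ker \<theta>" unfolding cong_ker_def using cong_refl[OF C] by simp
  fix x y assume "x \<in> cong_ker \<theta>" "y \<in> cong_ker \<theta>"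
  then show "x \<oplus> y \<in> cong_ker \<theta>" unfolding cong_ker_def using cong_pl[OF C, of x z y z] by simp
next
  assume C: "mv_congruence A pl ng \<theta>"
  fix x y assume x: "x \<in> cong_ker \<theta>" and y: "y \<in> A" and l: "le y x"
  have xA: "x \<in> A" and xz: "(x, z) \<in> \<theta>" using x cong_ker_def by auto
  have "meet x y = y" using meet_eq[OF y xA l] meet_comm xA y by simp
  then have e: "y = ng (ng x \<oplus> ng (ng x \<oplus> y))" using meet_formula xA y by simp
  have a1: "(ng x, ng z) \<in> \<theta>" using cong_ng[OF C xz] .
  have a2: "(ng x \<oplus> y, ng z \<oplus> y) \<in> \<theta>" using cong_pl[OF C a1 cong_refl[OF C y]] .
  have a3: "(ng x \<oplus> ng (ng x \<oplus> y), ng z \<oplus> ng (ng z \<oplus> y)) \<in> \<theta>" using cong_pl[OF C a1 cong_ng[OF C a2]] .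
  have "(ng (ng x \<oplus> ng (ng x \<oplus> y)), ng (ng z \<oplus> ng (ng z \<oplus> y))) \<in> \<theta>" using cong_ng[OF C a3] .
  moreover have "ng (ng z \<oplus> ng (ng z \<oplus> y)) = z" using y by simp
  ultimately have "(y, z) \<in> \<theta>" using e by simp
  then show "y \<in> cong_ker \<theta>" unfolding cong_ker_def using y by simp
qed

lemma cong_ker_sep: "mv_congruence A pl ng \<theta> \<Longrightarrow> x \<in> A \<Longrightarrow> y \<in> A \<Longrightarrow> dif x y \<in> cong_ker \<theta> \<Longrightarrow> dif y x \<in> cong_ker \<theta> \<Longrightarrow> (x, y) \<in> \<theta>"
proof -
  assume C: "mv_congruence A pl ng \<theta>" and h: "x \<in> A" "y \<in> A" "dif x y \<in> cong_ker \<theta>" "dif y x \<in> cong_ker \<theta>"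
  have d1: "(dif x y, z) \<in> \<theta>" using h(3) unfolding cong_ker_def by blast
  have d2: "(dif y x, z) \<in> \<theta>" using h(4) unfolding cong_ker_def by blast
  have "(dif x y \<oplus> y, z \<oplus> y) \<in> \<theta>" using cong_pl[OF C d1 cong_refl[OF C h(2)]] .
  then have 1: "(join x y, y) \<in> \<theta>" using h by (simp add: join_def)
  have "(dif y x \<oplus> x, z \<oplus> x) \<in> \<theta>" using cong_pl[OF C d2 cong_refl[OF C h(1)]] .
  then have 2: "(join y x, x) \<in> \<theta>" using h by (simp add: join_def)
  have "(x, join y x) \<in> \<theta>" using cong_sym[OF C 2] .
  then have "(x, join x y) \<in> \<theta>" using join_comm[OF h(1,2)] by simp
  then show ?thesis using cong_trans[OF C _ 1] by blast
qed

lemma quotient_class: "mv_congruence A pl ng \<theta> \<Longrightarrow> X \<in> A // \<theta> \<Longrightarrow> \<exists>x\<in>A. X = \<theta> `` {x}"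
  unfolding quotient_def by blast

lemma quotient_image_ideal:
  assumes C: "mv_congruence A pl ng \<theta>" and J: "mv_ideal A pl ng z J" and MJ: "cong_ker \<theta> \<subseteq> J"
  shows "mv_ideal (A // \<theta>) (quot_plus \<theta> pl) (quot_neg \<theta> ng) (\<theta> `` {z}) ((\<lambda>j. \<theta> `` {j}) ` J)"
  unfolding mv_ideal_def mv_le_def
proof (intro conjI ballI impI)
  have JA: "J \<subseteq> A" using J ideal_sub by blast
  show "(\<lambda>j. \<theta> `` {j}) ` J \<subseteq> A // \<theta>"
  proof (rule image_subsetI)
    fix x assume "x \<in> J"
    then have "x \<in> A" using JA by blast
    then show "\<theta> `` {x} \<in> A // \<theta>" by (rule quotientI)
  qed
  show "\<theta> `` {z} \<in> (\<lambda>j. \<theta> `` {j}) ` J" using ideal_z[OF J] by (rule imageI)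
next
  fix X Y assume "X \<in> (\<lambda>j. \<theta> `` {j}) ` J" "Y \<in> (\<lambda>j. \<theta> `` {j}) ` J"
  then obtain a b where ab: "a \<in> J" "b \<in> J" "X = \<theta> `` {a}" "Y = \<theta> `` {b}" by blast
  have "a \<in> A" "b \<in> A" using ideal_sub[OF J ab(1)] ideal_sub[OF J ab(2)] by auto
  then have "quot_plus \<theta> pl X Y = \<theta> `` {a \<oplus> b}" using quot_plus_class[OF C] ab by simp
  moreover have "a \<oplus> b \<in> J" using ideal_pl[OF J ab(1,2)] .
  ultimately show "quot_plus \<theta> pl X Y \<in> (\<lambda>j. \<theta> `` {j}) ` J" by simp
next
  fix X Y assume X: "X \<in> (\<lambda>j. \<theta> `` {j}) ` J" and Y: "Y \<in> A // \<theta>"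
    and l: "quot_plus \<theta> pl (quot_neg \<theta> ng Y) X = quot_neg \<theta> ng (\<theta> `` {z})"
  obtain j where j: "j \<in> J" "X = \<theta> `` {j}" using X by blast
  obtain y where y: "y \<in> A" "Y = \<theta> `` {y}" using quotient_class[OF C Y] by blast
  have jA: "j \<in> A" using j J ideal_sub by auto
  have "\<theta> `` {ng y \<oplus> j} = \<theta> `` {ng z}" using l j y quot_plus_class[OF C] quot_neg_class[OF C] jA by simp
  then have "(ng y \<oplus> j, ng z) \<in> \<theta>" using class_eq_iff[OF C] y jA by simp
  then have "(ng (ng y \<oplus> j), ng (ng z)) \<in> \<theta>" using cong_ng[OF C] by blast
  then have "(dif y j, z) \<in> \<theta>" by (simp add: dif_def)
  then have "dif y j \<in> J" using MJ y jA unfolding cong_ker_def by auto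
  then have s: "j \<oplus> dif y j \<in> J" using ideal_pl[OF J j(1)] by simp
  have "le y (j \<oplus> dif y j)" using resid[of y j "dif y j"] y jA by simp
  then have "y \<in> J" using ideal_le[OF J s y(1)] by simp
  then show "Y \<in> (\<lambda>j. \<theta> `` {j}) ` J" using y by blast
qed

lemma quotient_image_proper:
  assumes C: "mv_congruence A pl ng \<theta>" and J: "mv_ideal A pl ng z J" and MJ: "cong_ker \<theta> \<subseteq> J" and p: "ng z \<notin> J"
  shows "\<theta> `` {ng z} \<notin> (\<lambda>j. \<theta> `` {j}) ` J"
proof
  assume "\<theta> `` {ng z} \<in> (\<lambda>j. \<theta> `` {j}) ` J"
  then obtain j where j: "j \<in> J" "\<theta> `` {ng z} = \<theta> `` {j}" by blast
  have jA: "j \<in> A" using j J ideal_sub by auto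
  have "(ng z, j) \<in> \<theta>" using class_eq_iff[OF C] j jA by simp
  then have "(j, ng z) \<in> \<theta>" using cong_sym[OF C] by blast
  then have "(ng j, z) \<in> \<theta>" using cong_ng[OF C] by fastforce
  then have "ng j \<in> J" using MJ jA unfolding cong_ker_def by auto
  then have "j \<oplus> ng j \<in> J" using ideal_pl[OF J j(1)] by simp
  then show False using p jA by simp
qed

lemma carrier_is_ideal: "mv_ideal A pl ng z A"
  unfolding ideal_iff by simp

text \<open>A simple algebra has two distinct ideals, so it is nontrivial: the kernel of a
  congruence with simple quotient does not contain 1.\<close>
lemma cong_ker_proper:
  assumes C: "mv_congruence A pl ng \<theta>"
    and S: "simple_mv (A // \<theta>) (quot_plus \<theta> pl) (quot_neg \<theta> ng) (\<theta> `` {z})"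
  shows "ng z \<notin> cong_ker \<theta>"
proof
  assume n: "ng z \<in> cong_ker \<theta>"
  define IDS where "IDS = {J. mv_ideal (A // \<theta>) (quot_plus \<theta> pl) (quot_neg \<theta> ng) (\<theta> `` {z}) J}"
  have c2: "card IDS = 2" using S unfolding simple_mv_def IDS_def by blast
  have MI: "mv_ideal A pl ng z (cong_ker \<theta>)" using cong_ker_ideal[OF C] .
  have all: "\<And>x. x \<in> A \<Longrightarrow> (x, z) \<in> \<theta>"
  proof -
    fix x assume x: "x \<in> A"
    then have "x \<in> cong_ker \<theta>" using ideal_le[OF MI n x] by simp
    then show "(x, z) \<in> \<theta>" unfolding cong_ker_def by blast
  qed
  have Q: "A // \<theta> = {\<theta> `` {z}}"
  proof
    show "A // \<theta> \<subseteq> {\<theta> `` {z}}" using all class_eq[OF C] quotient_class[OF C] by blast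
    show "{\<theta> `` {z}} \<subseteq> A // \<theta>" using quotientI[OF zA] by simp
  qed
  have "IDS \<subseteq> {{\<theta> `` {z}}}"
  proof
    fix J assume "J \<in> IDS"
    then have "J \<subseteq> A // \<theta>" "\<theta> `` {z} \<in> J" unfolding IDS_def mv_ideal_def by auto
    then show "J \<in> {{\<theta> `` {z}}}" using Q by auto
  qed
  then have "card IDS \<le> 1" using card_mono[of "{{\<theta> `` {z}}}" IDS] by simp
  then show False using c2 by simp
qed

lemma class_notin_ker_image:
  assumes C: "mv_congruence A pl ng \<theta>" and jA: "j \<in> A" and j: "j \<notin> cong_ker \<theta>"
  shows "\<theta> `` {j} \<notin> (\<lambda>j. \<theta> `` {j}) ` cong_ker \<theta>"
proof
  assume "\<theta> `` {j} \<in> (\<lambda>j. \<theta> `` {j}) ` cong_ker \<theta>"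
  then obtain m where m: "m \<in> cong_ker \<theta>" "\<theta> `` {j} = \<theta> `` {m}" by blast
  have mA: "m \<in> A" using m cong_ker_def by auto
  have "(j, m) \<in> \<theta>" using class_eq_iff[OF C jA mA] m by simp
  moreover have "(m, z) \<in> \<theta>" using m cong_ker_def by auto
  ultimately have "(j, z) \<in> \<theta>" using cong_trans[OF C] by blast
  then show False using j jA cong_ker_def by auto
qed

text \<open>If the quotient has exactly two ideals, the kernel is maximal: a strictly larger proper
  ideal would give a third ideal of the quotient.\<close>
lemma cong_ker_max:
  assumes C: "mv_congruence A pl ng \<theta>"
    and S: "simple_mv (A // \<theta>) (quot_plus \<theta> pl) (quot_neg \<theta> ng) (\<theta> `` {z})"
  shows "max_ideal (cong_ker \<theta>)"
proof -
  define IDS where "IDS = {J. mv_ideal (A // \<theta>) (quot_plus \<theta> pl) (quot_neg \<theta> ng) (\<theta> `` {z}) J}"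
  have c2: "card IDS = 2" using S unfolding simple_mv_def IDS_def by blast
  then have fin: "finite IDS" by (metis card.infinite zero_neq_numeral)
  have MI: "mv_ideal A pl ng z (cong_ker \<theta>)" using cong_ker_ideal[OF C] .
  have prp: "ng z \<notin> cong_ker \<theta>" using cong_ker_proper[OF C S] .
  have "\<forall>J. mv_ideal A pl ng z J \<and> cong_ker \<theta> \<subseteq> J \<and> ng z \<notin> J \<longrightarrow> J = cong_ker \<theta>"
  proof (intro allI impI)
    fix J assume J: "mv_ideal A pl ng z J \<and> cong_ker \<theta> \<subseteq> J \<and> ng z \<notin> J"
    show "J = cong_ker \<theta>"
    proof (rule ccontr)
      assume ne: "J \<noteq> cong_ker \<theta>"
      then obtain j where j: "j \<in> J" "j \<notin> cong_ker \<theta>" using J by blast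
      define i1 where "i1 = (\<lambda>j. \<theta> `` {j}) ` cong_ker \<theta>"
      define i2 where "i2 = (\<lambda>j. \<theta> `` {j}) ` J"
      define i3 where "i3 = (\<lambda>j. \<theta> `` {j}) ` A"
      have in1: "i1 \<in> IDS" unfolding i1_def IDS_def using quotient_image_ideal[OF C MI] by simp
      have in2: "i2 \<in> IDS" unfolding i2_def IDS_def using quotient_image_ideal[OF C] J by simp
      have in3: "i3 \<in> IDS" unfolding i3_def IDS_def using quotient_image_ideal[OF C carrier_is_ideal] ideal_sub[OF MI] by blast
      have jA: "j \<in> A" using j J ideal_sub by blast
      have "\<theta> `` {j} \<notin> i1" unfolding i1_def using class_notin_ker_image[OF C jA j(2)] .
      moreover have "\<theta> `` {j} \<in> i2" unfolding i2_def using j by blast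
      ultimately have d12: "i1 \<noteq> i2" by blast
      have o3: "\<theta> `` {ng z} \<in> i3" unfolding i3_def by simp
      have d23: "i2 \<noteq> i3" using quotient_image_proper[OF C] J o3 unfolding i2_def by blast
      have d13: "i1 \<noteq> i3" using quotient_image_proper[OF C MI _ prp] o3 unfolding i1_def by blast
      have "card {i1, i2, i3} = 3" using d12 d23 d13 by simp
      moreover have "{i1, i2, i3} \<subseteq> IDS" using in1 in2 in3 by simp
      ultimately have "3 \<le> card IDS" using card_mono[OF fin] by metis
      then show False using c2 by simp
    qed
  qed
  then show ?thesis unfolding max_ideal_def using MI prp by blast
qed

end

section \<open>Pavelka algebras and their valuations\<close>

locale pav_alg =
  fixes A :: "'a set" and pl :: "'a \<Rightarrow> 'a \<Rightarrow> 'a" (infixl "\<oplus>" 65)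
    and ng :: "'a \<Rightarrow> 'a" and c :: "rat \<Rightarrow> 'a"
  assumes pav: "pavelka_algebra A pl ng c"

sublocale pav_alg \<subseteq> mv_alg A pl ng "c 0"
  using pav unfolding pavelka_algebra_def by unfold_locales blast

context pav_alg
begin

lemma cA[simp]: "qunit r \<Longrightarrow> c r \<in> A" using pav unfolding pavelka_algebra_def by blast
lemma c_pl: "qunit r \<Longrightarrow> qunit s \<Longrightarrow> c r \<oplus> c s = c (min (r + s) 1)"
  using pav unfolding pavelka_algebra_def by blast
lemma c_ng: "qunit r \<Longrightarrow> ng (c r) = c (1 - r)"
  using pav unfolding pavelka_algebra_def by blast
lemma q0[simp]: "qunit 0" and q1[simp]: "qunit 1" by (auto simp: qunit_def)
lemma c1: "ng (c 0) = c 1" using c_ng[of 0] by simp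

lemma c_dif: "qunit r \<Longrightarrow> qunit s \<Longrightarrow> dif (c r) (c s) = c (max (r - s) 0)"
proof -
  assume h: "qunit r" "qunit s"
  have q: "qunit (1 - r)" using h by (auto simp: qunit_def)
  have q2: "qunit (min (1 - r + s) 1)" using h by (auto simp: qunit_def)
  have "dif (c r) (c s) = ng (c (1 - r) \<oplus> c s)" by (simp add: dif_def c_ng h)
  also have "\<dots> = ng (c (min (1 - r + s) 1))" using c_pl[OF q h(2)] by simp
  also have "\<dots> = c (1 - min (1 - r + s) 1)" using c_ng[OF q2] by simp
  also have "1 - min (1 - r + s) 1 = max (r - s) 0" by (simp add: min_def max_def)
  finally show ?thesis .
qed

lemma c_nsum: "qunit r \<Longrightarrow> nsum n (c r) = c (min (of_nat n * r) 1)"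
proof (induction n)
  case 0 then show ?case by simp
next
  case (Suc n)
  have q: "qunit (min (of_nat n * r) 1)" using Suc.prems by (auto simp: qunit_def)
  have "nsum (Suc n) (c r) = c r \<oplus> c (min (of_nat n * r) 1)" using Suc by simp
  also have "\<dots> = c (min (r + min (of_nat n * r) 1) 1)" using c_pl[OF Suc.prems q] by simp
  also have "min (r + min (of_nat n * r) 1) 1 = min (of_nat (Suc n) * r) 1"
    using Suc.prems by (auto simp: qunit_def min_def algebra_simps)
  finally show ?case .
qed

lemma ideal_nsum: "mv_ideal A pl ng (c 0) M \<Longrightarrow> x \<in> M \<Longrightarrow> nsum n x \<in> M"
  by (induction n) (auto simp: ideal_z ideal_pl)

lemma c_in_max: "max_ideal M \<Longrightarrow> qunit r \<Longrightarrow> c r \<in> M \<Longrightarrow> r = 0"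
proof (rule ccontr)
  assume M: "max_ideal M" and r: "qunit r" "c r \<in> M" "r \<noteq> 0"
  have I: "mv_ideal A pl ng (c 0) M" using M unfolding max_ideal_def by blast
  have rp: "r > 0" using r by (auto simp: qunit_def)
  obtain n where n: "1 / r < of_nat n" using reals_Archimedean2 by blast
  then have "1 \<le> of_nat n * r" using rp by (simp add: field_simps)
  then have "nsum n (c r) = c 1" using c_nsum[OF r(1)] by (simp add: min_def)
  moreover have "nsum n (c r) \<in> M" using ideal_nsum I r by simp
  ultimately have "ng (c 0) \<in> M" using c1 by simp
  then show False using M unfolding max_ideal_def by blast
qed

lemma c_order_M: "max_ideal M \<Longrightarrow> x \<in> A \<Longrightarrow> qunit r \<Longrightarrow> qunit s \<Longrightarrow> dif (c r) x \<in> M \<Longrightarrow> dif x (c s) \<in> M \<Longrightarrow> r \<le> s"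
proof -
  assume M: "max_ideal M" and h: "x \<in> A" "qunit r" "qunit s" "dif (c r) x \<in> M" "dif x (c s) \<in> M"
  have I: "mv_ideal A pl ng (c 0) M" using M unfolding max_ideal_def by blast
  have "dif (c r) x \<oplus> dif x (c s) \<in> M" using ideal_pl[OF I h(4,5)] .
  moreover have "le (dif (c r) (c s)) (dif (c r) x \<oplus> dif x (c s))" using dif_tri h by simp
  ultimately have "c (max (r - s) 0) \<in> M" using ideal_le[OF I] c_dif h by (metis difA cA)
  moreover have "qunit (max (r - s) 0)" using h by (auto simp: qunit_def)
  ultimately have "max (r - s) 0 = 0" using c_in_max M by blast
  then show ?thesis by simp
qed

lemma dif_c1[simp]: "x \<in> A \<Longrightarrow> dif x (c 1) = c 0"
  using c1 by (metis dif_def dneg ngA pl_one cA q0)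

definition valuation :: "'a set \<Rightarrow> 'a \<Rightarrow> real" where
  "valuation M x = Sup (real_of_rat ` {r. qunit r \<and> dif (c r) x \<in> M})"

lemma max_ideal_is_ideal: "max_ideal M \<Longrightarrow> mv_ideal A pl ng (c 0) M" unfolding max_ideal_def by blast

lemma valuation_ge: "max_ideal M \<Longrightarrow> qunit r \<Longrightarrow> dif (c r) x \<in> M \<Longrightarrow> real_of_rat r \<le> valuation M x"
  unfolding valuation_def
  by (rule cSup_upper) (auto simp: bdd_above_def qunit_def intro!: exI[of _ 1] simp flip: of_rat_less_eq)

lemma valuation_le: "max_ideal M \<Longrightarrow> x \<in> A \<Longrightarrow> qunit s \<Longrightarrow> dif x (c s) \<in> M \<Longrightarrow> valuation M x \<le> real_of_rat s"
  unfolding valuation_def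
proof (rule cSup_least)
  assume M: "max_ideal M" and h: "x \<in> A" "qunit s" "dif x (c s) \<in> M"
  show "real_of_rat ` {r. qunit r \<and> dif (c r) x \<in> M} \<noteq> {}"
    using h ideal_z[OF max_ideal_is_ideal[OF M]] by (auto intro!: exI[of _ 0])
  fix t assume "t \<in> real_of_rat ` {r. qunit r \<and> dif (c r) x \<in> M}"
  then obtain r where r: "t = real_of_rat r" "qunit r" "dif (c r) x \<in> M" by auto
  then have "r \<le> s" using c_order_M M h by blast
  then show "t \<le> real_of_rat s" using r by (simp add: of_rat_less_eq)
qed

lemma valuation_range: "max_ideal M \<Longrightarrow> x \<in> A \<Longrightarrow> 0 \<le> valuation M x \<and> valuation M x \<le> 1"
proof -
  assume M: "max_ideal M" and x: "x \<in> A"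
  have I: "mv_ideal A pl ng (c 0) M" using max_ideal_is_ideal M .
  have "real_of_rat 0 \<le> valuation M x" using valuation_ge[OF M q0] x ideal_z[OF I] by simp
  moreover have "valuation M x \<le> real_of_rat 1" using valuation_le[OF M x q1] x ideal_z[OF I] by simp
  ultimately show ?thesis by simp
qed

lemma valuation_bracket:
  assumes M: "max_ideal M" and x: "x \<in> A" and n: "n \<ge> (1::nat)"
  shows "\<exists>r s. qunit r \<and> qunit s \<and> s \<le> r + 1 / of_nat n \<and> dif (c r) x \<in> M \<and> dif x (c s) \<in> M"
proof -
  have I: "mv_ideal A pl ng (c 0) M" using max_ideal_is_ideal M .
  define S where "S = {j. j \<le> n \<and> dif (c (of_nat j / of_nat n)) x \<in> M}"
  have fin: "finite S" unfolding S_def by simp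
  have "0 \<in> S" unfolding S_def using x ideal_z[OF I] by simp
  define j where "j = Max S"
  have jS: "j \<in> S" using fin \<open>0 \<in> S\<close> j_def Max_in by blast
  have jn: "j \<le> n" using jS S_def by simp
  have qj: "qunit (of_nat j / of_nat n)" using jn n by (auto simp: qunit_def)
  show ?thesis
  proof (cases "j = n")
    case True
    then have "dif (c 1) x \<in> M" using jS n unfolding S_def by simp
    moreover have "dif x (c 1) \<in> M" using x ideal_z[OF I] by simp
    ultimately show ?thesis by (intro exI[of _ 1]) simp
  next
    case False
    then have jn': "Suc j \<le> n" using jn by simp
    have "Suc j \<notin> S" using Max_ge[OF fin] j_def by fastforce
    then have nS: "dif (c (of_nat (Suc j) / of_nat n)) x \<notin> M" using jn' S_def by simp
    have qs: "qunit (of_nat (Suc j) / of_nat n)" using jn' n by (auto simp: qunit_def)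
    have d: "dif x (c (of_nat (Suc j) / of_nat n)) \<in> M" using max_ideal_linear[OF M x cA[OF qs]] nS by blast
    have "of_nat (Suc j) / of_nat n = of_nat j / of_nat n + 1 / (of_nat n :: rat)"
      by (simp add: add_divide_distrib)
    then show ?thesis using qj qs d jS unfolding S_def
      by (intro exI[of _ "of_nat j / of_nat n"] exI[of _ "of_nat (Suc j) / of_nat n"]) simp
  qed
qed

lemma valuation_pl:
  assumes M: "max_ideal M" and x: "x \<in> A" and y: "y \<in> A"
  shows "valuation M (x \<oplus> y) = min (valuation M x + valuation M y) 1"
proof (rule eq_if_close)
  fix n :: nat assume n: "n \<ge> 1"
  have I: "mv_ideal A pl ng (c 0) M" using max_ideal_is_ideal M .
  obtain r1 s1 where b1: "qunit r1" "qunit s1" "s1 \<le> r1 + 1 / of_nat n" "dif (c r1) x \<in> M" "dif x (c s1) \<in> M"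
    using valuation_bracket[OF M x n] by blast
  obtain r2 s2 where b2: "qunit r2" "qunit s2" "s2 \<le> r2 + 1 / of_nat n" "dif (c r2) y \<in> M" "dif y (c s2) \<in> M"
    using valuation_bracket[OF M y n] by blast
  have qr: "qunit (min (r1 + r2) 1)" and qs: "qunit (min (s1 + s2) 1)"
    using b1 b2 by (auto simp: qunit_def)
  have "le (dif (c r1 \<oplus> c r2) (x \<oplus> y)) (dif (c r1) x \<oplus> dif (c r2) y)" using dif_pl2 x y b1 b2 by simp
  moreover have sM: "dif (c r1) x \<oplus> dif (c r2) y \<in> M" using ideal_pl[OF I b1(4) b2(4)] .
  moreover have "dif (c (min (r1 + r2) 1)) (x \<oplus> y) \<in> A" using qr x y by simp
  ultimately have "dif (c (min (r1 + r2) 1)) (x \<oplus> y) \<in> M" using ideal_le[OF I sM] c_pl[OF b1(1) b2(1)] by simp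
  then have L: "real_of_rat (min (r1 + r2) 1) \<le> valuation M (x \<oplus> y)" using valuation_ge[OF M qr] by blast
  have "le (dif (x \<oplus> y) (c s1 \<oplus> c s2)) (dif x (c s1) \<oplus> dif y (c s2))" using dif_pl2 x y b1 b2 by simp
  moreover have sM2: "dif x (c s1) \<oplus> dif y (c s2) \<in> M" using ideal_pl[OF I b1(5) b2(5)] .
  moreover have "dif (x \<oplus> y) (c (min (s1 + s2) 1)) \<in> A" using qs x y by simp
  ultimately have "dif (x \<oplus> y) (c (min (s1 + s2) 1)) \<in> M" using ideal_le[OF I sM2] c_pl[OF b1(2) b2(2)] by simp
  then have U: "valuation M (x \<oplus> y) \<le> real_of_rat (min (s1 + s2) 1)" using valuation_le[OF M _ qs] x y by simp
  have bx: "real_of_rat r1 \<le> valuation M x" "valuation M x \<le> real_of_rat s1" using valuation_ge[OF M b1(1,4)] valuation_le[OF M x b1(2,5)] by auto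
  have by': "real_of_rat r2 \<le> valuation M y" "valuation M y \<le> real_of_rat s2" using valuation_ge[OF M b2(1,4)] valuation_le[OF M y b2(2,5)] by auto
  have w1: "real_of_rat s1 \<le> real_of_rat r1 + 1 / real n" using b1(3) of_rat_le_plus_inverse by blast
  have w2: "real_of_rat s2 \<le> real_of_rat r2 + 1 / real n" using b2(3) of_rat_le_plus_inverse by blast
  have L': "min (real_of_rat r1 + real_of_rat r2) 1 \<le> valuation M (x \<oplus> y)" using L by (simp add: of_rat_min of_rat_add)
  have U': "valuation M (x \<oplus> y) \<le> min (real_of_rat s1 + real_of_rat s2) 1" using U by (simp add: of_rat_min of_rat_add)
  have two: "2 / real n = 1 / real n + 1 / real n" by simp
  show "\<bar>valuation M (x \<oplus> y) - min (valuation M x + valuation M y) 1\<bar> \<le> 2 / real n"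
    unfolding two abs_le_iff min_def using L' U' bx by' w1 w2 by (auto split: if_splits)
qed

lemma valuation_ng:
  assumes M: "max_ideal M" and x: "x \<in> A"
  shows "valuation M (ng x) = 1 - valuation M x"
proof (rule eq_if_close)
  fix n :: nat assume n: "n \<ge> 1"
  obtain r s where b: "qunit r" "qunit s" "s \<le> r + 1 / of_nat n" "dif (c r) x \<in> M" "dif x (c s) \<in> M"
    using valuation_bracket[OF M x n] by blast
  have q1: "qunit (1 - s)" and q2: "qunit (1 - r)" using b by (auto simp: qunit_def)
  have "dif (c (1 - s)) (ng x) = dif x (c s)" using dif_ng[of x "c s"] c_ng[OF b(2)] x b by simp
  then have "real_of_rat (1 - s) \<le> valuation M (ng x)" using valuation_ge[OF M q1] b by simp
  then have L: "1 - real_of_rat s \<le> valuation M (ng x)" by (simp add: of_rat_diff)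
  have "dif (ng x) (c (1 - r)) = dif (c r) x" using dif_ng[of "c r" x] c_ng[OF b(1)] x b by simp
  then have "valuation M (ng x) \<le> real_of_rat (1 - r)" using valuation_le[OF M _ q2] b x by simp
  then have U: "valuation M (ng x) \<le> 1 - real_of_rat r" by (simp add: of_rat_diff)
  have bx: "real_of_rat r \<le> valuation M x" "valuation M x \<le> real_of_rat s" using valuation_ge[OF M b(1,4)] valuation_le[OF M x b(2,5)] by auto
  have w: "real_of_rat s \<le> real_of_rat r + 1 / real n" using b(3) of_rat_le_plus_inverse by blast
  have two: "2 / real n = 1 / real n + 1 / real n" by simp
  have "1 / real n \<ge> 0" by simp
  then show "\<bar>valuation M (ng x) - (1 - valuation M x)\<bar> \<le> 2 / real n"
    unfolding two abs_le_iff using L U bx w by linarith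
qed

lemma valuation_c: "max_ideal M \<Longrightarrow> qunit r \<Longrightarrow> valuation M (c r) = real_of_rat r"
proof -
  assume M: "max_ideal M" and r: "qunit r"
  have z: "dif (c r) (c r) \<in> M" using ideal_z[OF max_ideal_is_ideal[OF M]] r by simp
  show ?thesis using valuation_ge[OF M r z] valuation_le[OF M _ r z] r by simp
qed

definition std_hom :: "('a \<Rightarrow> real) \<Rightarrow> bool" where
  "std_hom k \<longleftrightarrow> (\<forall>x\<in>A. 0 \<le> k x \<and> k x \<le> 1) \<and> (\<forall>x\<in>A. \<forall>y\<in>A. k (x \<oplus> y) = min (k x + k y) 1) \<and>
     (\<forall>x\<in>A. k (ng x) = 1 - k x) \<and> (\<forall>r. qunit r \<longrightarrow> k (c r) = real_of_rat r)"

lemma valuation_std_hom: "max_ideal M \<Longrightarrow> std_hom (valuation M)"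
  unfolding std_hom_def using valuation_range valuation_pl valuation_ng valuation_c by blast

lemma std_hom_range: "std_hom k \<Longrightarrow> x \<in> A \<Longrightarrow> 0 \<le> k x \<and> k x \<le> 1" unfolding std_hom_def by blast
lemma std_hom_pl: "std_hom k \<Longrightarrow> x \<in> A \<Longrightarrow> y \<in> A \<Longrightarrow> k (x \<oplus> y) = min (k x + k y) 1" unfolding std_hom_def by blast
lemma std_hom_ng: "std_hom k \<Longrightarrow> x \<in> A \<Longrightarrow> k (ng x) = 1 - k x" unfolding std_hom_def by blast
lemma std_hom_c: "std_hom k \<Longrightarrow> qunit r \<Longrightarrow> k (c r) = real_of_rat r" unfolding std_hom_def by blast

lemma std_hom_dif: "std_hom k \<Longrightarrow> x \<in> A \<Longrightarrow> y \<in> A \<Longrightarrow> k (dif x y) = max (k x - k y) 0"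
proof -
  assume h: "std_hom k" "x \<in> A" "y \<in> A"
  have "k (dif x y) = 1 - k (ng x \<oplus> y)" unfolding dif_def using std_hom_ng[OF h(1)] h by simp
  also have "k (ng x \<oplus> y) = min (1 - k x + k y) 1" using std_hom_pl[OF h(1)] std_hom_ng[OF h(1)] h by simp
  finally show ?thesis using std_hom_range[OF h(1) h(2)] std_hom_range[OF h(1) h(3)] by (simp add: min_def max_def)
qed
lemma std_hom_mult: "std_hom k \<Longrightarrow> x \<in> A \<Longrightarrow> y \<in> A \<Longrightarrow> k (mult x y) = max (k x + k y - 1) 0"
proof -
  assume h: "std_hom k" "x \<in> A" "y \<in> A"
  have "k (mult x y) = 1 - k (ng x \<oplus> ng y)" unfolding mult_def using std_hom_ng[OF h(1)] h by simp
  also have "k (ng x \<oplus> ng y) = min (1 - k x + (1 - k y)) 1" using std_hom_pl[OF h(1)] std_hom_ng[OF h(1)] h by simp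
  finally show ?thesis using std_hom_range[OF h(1) h(2)] std_hom_range[OF h(1) h(3)] by (simp add: min_def max_def)
qed
lemma std_hom_join: "std_hom k \<Longrightarrow> x \<in> A \<Longrightarrow> y \<in> A \<Longrightarrow> k (join x y) = max (k x) (k y)"
proof -
  assume h: "std_hom k" "x \<in> A" "y \<in> A"
  have "k (join x y) = min (k (dif x y) + k y) 1" unfolding join_def using std_hom_pl[OF h(1)] h by simp
  then show ?thesis using std_hom_dif[OF h] std_hom_range[OF h(1) h(2)] std_hom_range[OF h(1) h(3)] by (simp add: min_def max_def)
qed
lemma std_hom_le: "std_hom k \<Longrightarrow> x \<in> A \<Longrightarrow> y \<in> A \<Longrightarrow> le x y \<Longrightarrow> k x \<le> k y"
proof -
  assume h: "std_hom k" "x \<in> A" "y \<in> A" "le x y"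
  then have "k (ng x \<oplus> y) = k (ng (c 0))" unfolding le_def by simp
  then have "min (1 - k x + k y) 1 = 1" using h std_hom_pl[OF h(1)] std_hom_ng[OF h(1)] std_hom_c[OF h(1) q0] by simp
  then show ?thesis by (simp add: min_def split: if_splits)
qed
lemma std_hom_nsum: "std_hom k \<Longrightarrow> x \<in> A \<Longrightarrow> k (nsum n x) = min (real n * k x) 1"
proof (induction n)
  case 0 then show ?case using std_hom_c[OF 0(1) q0] by simp
next
  case (Suc n)
  then show ?case using std_hom_pl[OF Suc.prems(1) Suc.prems(2), of "nsum n x"] std_hom_range[OF Suc.prems]
    by (simp add: min_def algebra_simps)
qed

lemma valuation_zero_iff: "max_ideal M \<Longrightarrow> x \<in> A \<Longrightarrow> valuation M x = 0 \<longleftrightarrow> x \<in> M"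
proof
  assume M: "max_ideal M" and x: "x \<in> A"
  {
    assume "x \<in> M"
    then have "dif x (c 0) \<in> M" using x by simp
    then have "valuation M x \<le> 0" using valuation_le[OF M x q0] by simp
    then show "valuation M x = 0" using valuation_range[OF M x] by simp
  }
  assume k0: "valuation M x = 0"
  show "x \<in> M"
  proof (rule ccontr)
    assume "x \<notin> M"
    then obtain n where n: "ng (nsum n x) \<in> M" using max_ideal_archimedean[OF M x] by blast
    have "dif (c 1) (nsum n x) = ng (nsum n x)" using c1[symmetric] x by (simp add: dif_def)
    then have "real_of_rat 1 \<le> valuation M (nsum n x)" using valuation_ge[OF M q1] n by simp
    moreover have "valuation M (nsum n x) = 0" using std_hom_nsum[OF valuation_std_hom[OF M] x] k0 by simp
    ultimately show False by simp
  qed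
qed

end

section \<open>Part (i): [0,1]^I with g_R is a monadic Pavelka algebra\<close>

locale fuzzy_equivalence =
  fixes I :: "'i set" and R :: "'i \<Rightarrow> 'i \<Rightarrow> real"
  assumes fe: "fuzzy_equiv I R"
begin

lemma R_range: "i \<in> I \<Longrightarrow> j \<in> I \<Longrightarrow> 0 \<le> R i j \<and> R i j \<le> 1" using fe unfolding fuzzy_equiv_def by blast
lemma R_refl: "i \<in> I \<Longrightarrow> R i i = 1" using fe unfolding fuzzy_equiv_def by blast
lemma R_sym: "i \<in> I \<Longrightarrow> j \<in> I \<Longrightarrow> R i j = R j i" using fe unfolding fuzzy_equiv_def by blast
lemma R_trans: "i \<in> I \<Longrightarrow> j \<in> I \<Longrightarrow> k \<in> I \<Longrightarrow> std_mult (R i j) (R j k) \<le> R i k"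
  using fe unfolding fuzzy_equiv_def by blast

lemma pow_val: "x \<in> pow_carrier I \<Longrightarrow> i \<in> I \<Longrightarrow> 0 \<le> x i \<and> x i \<le> 1" unfolding pow_carrier_def by blast

abbreviation g :: "('i \<Rightarrow> real) \<Rightarrow> 'i \<Rightarrow> real" where "g \<equiv> g_R I R"

lemma g_val: "i \<in> I \<Longrightarrow> g x i = (SUP j\<in>I. std_mult (R i j) (x j))" unfolding g_R_def by simp
lemma g_out: "i \<notin> I \<Longrightarrow> g x i = 0" unfolding g_R_def by simp

lemma g_family_bdd: "x \<in> pow_carrier I \<Longrightarrow> i \<in> I \<Longrightarrow> bdd_above ((\<lambda>j. std_mult (R i j) (x j)) ` I)"
proof (rule bdd_aboveI[of _ 1])
  fix t assume x: "x \<in> pow_carrier I" and i: "i \<in> I" and "t \<in> (\<lambda>j. std_mult (R i j) (x j)) ` I"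
  then obtain j where j: "j \<in> I" "t = std_mult (R i j) (x j)" by blast
  then show "t \<le> 1" using std_mult_range[of "R i j" "x j"] R_range[OF i j(1)] pow_val[OF x j(1)] by simp
qed

lemma g_upper: "x \<in> pow_carrier I \<Longrightarrow> i \<in> I \<Longrightarrow> j \<in> I \<Longrightarrow> std_mult (R i j) (x j) \<le> g x i"
proof -
  assume x: "x \<in> pow_carrier I" and i: "i \<in> I" and j: "j \<in> I"
  show ?thesis unfolding g_val[OF i] by (rule cSUP_upper[OF j g_family_bdd[OF x i]])
qed

lemma g_least: "i \<in> I \<Longrightarrow> (\<And>j. j \<in> I \<Longrightarrow> std_mult (R i j) (x j) \<le> t) \<Longrightarrow> g x i \<le> t"
proof -
  assume i: "i \<in> I" and h: "\<And>j. j \<in> I \<Longrightarrow> std_mult (R i j) (x j) \<le> t"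
  have "I \<noteq> {}" using i by blast
  then show ?thesis unfolding g_val[OF i] using h by (rule cSUP_least)
qed

text \<open>g is inflationary (reflexivity of R) and maps into [0,1]^I.\<close>
lemma g_ext: "x \<in> pow_carrier I \<Longrightarrow> i \<in> I \<Longrightarrow> x i \<le> g x i"
  using g_upper[of x i i] R_refl std_mult_one pow_val by simp

lemma g_carrier: "x \<in> pow_carrier I \<Longrightarrow> g x \<in> pow_carrier I"
proof -
  assume x: "x \<in> pow_carrier I"
  have "\<And>i. i \<in> I \<Longrightarrow> 0 \<le> g x i \<and> g x i \<le> 1"
  proof -
    fix i assume i: "i \<in> I"
    have "0 \<le> g x i" using g_ext[OF x i] pow_val[OF x i] by simp
    moreover have "g x i \<le> 1" using g_least[OF i] R_range i pow_val[OF x] std_mult_range by fastforce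
    ultimately show "0 \<le> g x i \<and> g x i \<le> 1" by simp
  qed
  then show ?thesis unfolding pow_carrier_def using g_out by auto
qed

text \<open>g x is R-closed: R i j \<cdot> g x j \<le> g x i, by transitivity of R.  Hence g is idempotent.\<close>
lemma g_R_closed: "x \<in> pow_carrier I \<Longrightarrow> i \<in> I \<Longrightarrow> j \<in> I \<Longrightarrow> std_mult (R i j) (g x j) \<le> g x i"
proof -
  assume x: "x \<in> pow_carrier I" and i: "i \<in> I" and j: "j \<in> I"
  define G where "G = g x i"
  have G0: "0 \<le> G" using g_ext[OF x i] pow_val[OF x i] G_def by simp
  have "\<And>k. k \<in> I \<Longrightarrow> std_mult (R j k) (x k) \<le> 1 - R i j + G"
  proof -
    fix k assume k: "k \<in> I"
    have "std_mult (R i j) (std_mult (R j k) (x k)) = std_mult (std_mult (R i j) (R j k)) (x k)"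
      using std_mult_assoc R_range i j k pow_val[OF x k] by simp
    also have "\<dots> \<le> std_mult (R i k) (x k)" using std_mult_mono R_trans[OF i j k] by simp
    also have "\<dots> \<le> G" using g_upper[OF x i k] G_def by simp
    finally have "std_mult (R i j) (std_mult (R j k) (x k)) \<le> G" .
    then show "std_mult (R j k) (x k) \<le> 1 - R i j + G" using R_range[OF i j] G0 unfolding std_mult_alt
      by (auto simp: max_def split: if_splits)
  qed
  then have "g x j \<le> 1 - R i j + G" using g_least[OF j] by blast
  then show ?thesis unfolding std_mult_alt G_def using G0 G_def by simp
qed

lemma g_idem: "x \<in> pow_carrier I \<Longrightarrow> g (g x) = g x"
proof
  fix i assume x: "x \<in> pow_carrier I"
  show "g (g x) i = g x i"
  proof (cases "i \<in> I")
    case True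
    have "g (g x) i \<le> g x i" using g_least[OF True] g_R_closed[OF x True] by blast
    moreover have "g x i \<le> g (g x) i" using g_ext[OF g_carrier[OF x] True] .
    ultimately show ?thesis by simp
  qed (simp add: g_out)
qed

lemma power_mv_algebra: "mv_algebra (pow_carrier I) (pow_plus I) (pow_neg I) (pow_const I 0)"
  unfolding mv_algebra_def
proof (intro conjI ballI)
  show "pow_const I 0 \<in> pow_carrier I" unfolding pow_const_def pow_carrier_def by simp
next
  fix x y assume "x \<in> pow_carrier I" "y \<in> pow_carrier I"
  then show "pow_plus I x y \<in> pow_carrier I" unfolding pow_plus_def pow_carrier_def by auto
next
  fix x assume "x \<in> pow_carrier I"
  then show "pow_neg I x \<in> pow_carrier I" unfolding pow_neg_def pow_carrier_def by auto
next
  fix x y w assume "x \<in> pow_carrier I" "y \<in> pow_carrier I" "w \<in> pow_carrier I"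
  then show "pow_plus I (pow_plus I x y) w = pow_plus I x (pow_plus I y w)"
    unfolding pow_plus_def pow_carrier_def by (auto simp: fun_eq_iff min_def)
next
  fix x y assume "x \<in> pow_carrier I" "y \<in> pow_carrier I"
  then show "pow_plus I x y = pow_plus I y x"
    unfolding pow_plus_def by (auto simp: fun_eq_iff add.commute)
next
  fix x assume "x \<in> pow_carrier I"
  then show "pow_plus I x (pow_const I 0) = x"
    unfolding pow_plus_def pow_const_def pow_carrier_def by (auto simp: fun_eq_iff min_def)
next
  fix x assume "x \<in> pow_carrier I"
  then show "pow_neg I (pow_neg I x) = x"
    unfolding pow_neg_def pow_carrier_def by (auto simp: fun_eq_iff)
next
  fix x assume "x \<in> pow_carrier I"
  then show "pow_plus I x (pow_neg I (pow_const I 0)) = pow_neg I (pow_const I 0)"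
    unfolding pow_plus_def pow_neg_def pow_const_def pow_carrier_def by (auto simp: fun_eq_iff min_def)
next
  fix x y assume "x \<in> pow_carrier I" "y \<in> pow_carrier I"
  then show "pow_plus I (pow_neg I (pow_plus I (pow_neg I x) y)) y = pow_plus I (pow_neg I (pow_plus I (pow_neg I y) x)) x"
    unfolding pow_plus_def pow_neg_def pow_carrier_def by (auto simp: fun_eq_iff min_def)
qed

lemma power_pavelka: "pavelka_algebra (pow_carrier I) (pow_plus I) (pow_neg I) (pow_const I)"
  unfolding pavelka_algebra_def
proof (intro conjI allI impI)
  show "mv_algebra (pow_carrier I) (pow_plus I) (pow_neg I) (pow_const I 0)" by (rule power_mv_algebra)
next
  fix r assume "qunit r"
  then show "pow_const I r \<in> pow_carrier I" unfolding pow_const_def pow_carrier_def qunit_def by auto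
next
  fix r s assume "qunit r \<and> qunit s"
  then show "pow_plus I (pow_const I r) (pow_const I s) = pow_const I (min (r + s) 1)"
    unfolding pow_plus_def pow_const_def by (auto simp: fun_eq_iff of_rat_min of_rat_add)
next
  fix r assume "qunit r"
  then show "pow_neg I (pow_const I r) = pow_const I (1 - r)"
    unfolding pow_neg_def pow_const_def by (auto simp: fun_eq_iff of_rat_diff)
qed

lemma pow_le: "x \<in> pow_carrier I \<Longrightarrow> y \<in> pow_carrier I \<Longrightarrow>
   mv_le (pow_plus I) (pow_neg I) (pow_const I 0) x y \<longleftrightarrow> (\<forall>i\<in>I. x i \<le> y i)"
proof -
  have e: "\<And>i. pow_plus I (pow_neg I x) y i = (if i \<in> I then min (1 - x i + y i) 1 else 0)"
    unfolding pow_plus_def pow_neg_def by simp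
  have f: "\<And>i. pow_neg I (pow_const I 0) i = (if i \<in> I then 1 else 0)"
    unfolding pow_neg_def pow_const_def by simp
  show ?thesis unfolding mv_le_def
  proof
    assume h: "pow_plus I (pow_neg I x) y = pow_neg I (pow_const I 0)"
    show "\<forall>i\<in>I. x i \<le> y i"
    proof
      fix i assume i: "i \<in> I"
      have "min (1 - x i + y i) 1 = 1" using fun_cong[OF h, of i] e f i by simp
      then show "x i \<le> y i" by (simp add: min_def split: if_splits)
    qed
  next
    assume h: "\<forall>i\<in>I. x i \<le> y i"
    show "pow_plus I (pow_neg I x) y = pow_neg I (pow_const I 0)"
    proof
      fix i show "pow_plus I (pow_neg I x) y i = pow_neg I (pow_const I 0) i"
        using e f h by (cases "i \<in> I") (auto simp: min_def)
    qed
  qed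
qed

lemma pow_mult: "mv_mult (pow_plus I) (pow_neg I) a b = (\<lambda>i. if i \<in> I then std_mult (a i) (b i) else 0)"
  unfolding mv_mult_def pow_plus_def pow_neg_def std_mult_def by (auto simp: fun_eq_iff)

lemma g_mono: "x \<in> pow_carrier I \<Longrightarrow> y \<in> pow_carrier I \<Longrightarrow> (\<forall>i\<in>I. x i \<le> y i) \<Longrightarrow> i \<in> I \<Longrightarrow> g x i \<le> g y i"
proof -
  assume x: "x \<in> pow_carrier I" and y: "y \<in> pow_carrier I" and le: "\<forall>i\<in>I. x i \<le> y i" and i: "i \<in> I"
  show ?thesis
  proof (rule g_least[OF i])
    fix j assume j: "j \<in> I"
    have "std_mult (R i j) (x j) \<le> std_mult (R i j) (y j)" using std_mult_mono le j by simp
    also have "\<dots> \<le> g y i" using g_upper[OF y i j] .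
    finally show "std_mult (R i j) (x j) \<le> g y i" .
  qed
qed

text \<open>The negation of an R-closed element is R-closed, by symmetry of R.\<close>
lemma g_ng: "x \<in> pow_carrier I \<Longrightarrow> g (pow_neg I (g x)) = pow_neg I (g x)"
proof
  fix i assume x: "x \<in> pow_carrier I"
  have gc: "g x \<in> pow_carrier I" using g_carrier[OF x] .
  have nc: "pow_neg I (g x) \<in> pow_carrier I" using gc unfolding pow_neg_def pow_carrier_def by auto
  show "g (pow_neg I (g x)) i = pow_neg I (g x) i"
  proof (cases "i \<in> I")
    case True
    have "g (pow_neg I (g x)) i \<le> pow_neg I (g x) i"
    proof (rule g_least[OF True])
      fix j assume j: "j \<in> I"
      have st: "std_mult (R j i) (g x i) \<le> g x j" using g_R_closed[OF x j True] .
      have r: "0 \<le> R i j" "R i j \<le> 1" using R_range[OF True j] by auto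
      have v: "0 \<le> g x i" "g x i \<le> 1" "0 \<le> g x j" "g x j \<le> 1" using pow_val[OF gc True] pow_val[OF gc j] by auto
      show "std_mult (R i j) (pow_neg I (g x) j) \<le> pow_neg I (g x) i"
        using st R_sym[OF True j] r v j True unfolding pow_neg_def std_mult_alt by (auto simp: max_def split: if_splits)
    qed
    moreover have "pow_neg I (g x) i \<le> g (pow_neg I (g x)) i" using g_ext[OF nc True] .
    ultimately show ?thesis by simp
  qed (simp add: g_out pow_neg_def)
qed

text \<open>Lukasiewicz multiplication by a constant a \<in> [0,1] commutes with g_R: it is monotone,
  and a \<cdot> t \<le> T is equivalent to t \<le> T + 1 - a whenever T \<ge> 0.\<close>
lemma g_scale:
  assumes a: "0 \<le> a" "a \<le> 1" and x: "x \<in> pow_carrier I" and i: "i \<in> I"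
  defines "y \<equiv> \<lambda>j. if j \<in> I then std_mult a (x j) else 0"
  shows "g y i = std_mult a (g x i)"
proof (rule antisym)
  have yc: "y \<in> pow_carrier I" unfolding y_def pow_carrier_def using std_mult_range a pow_val[OF x] by auto
  have y_eq: "std_mult (R i j) (y j) = std_mult a (std_mult (R i j) (x j))" if j: "j \<in> I" for j
  proof -
    have bounds: "0 \<le> R i j" "R i j \<le> 1" "0 \<le> x j" "x j \<le> 1"
      using R_range[OF i j] pow_val[OF x j] by auto
    have "std_mult (R i j) (std_mult a (x j)) = std_mult (std_mult a (R i j)) (x j)"
      using std_mult_assoc[of "R i j" a "x j"] bounds a by (simp add: std_mult_comm)
    also have "\<dots> = std_mult a (std_mult (R i j) (x j))"
      using std_mult_assoc[of a "R i j" "x j"] bounds a by simp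
    finally show ?thesis unfolding y_def using j by simp
  qed
  show "g y i \<le> std_mult a (g x i)"
  proof (rule g_least[OF i])
    fix j assume j: "j \<in> I"
    show "std_mult (R i j) (y j) \<le> std_mult a (g x i)"
      using y_eq[OF j] std_mult_mono[OF order_refl g_upper[OF x i j]] by simp
  qed
  define T where "T = g y i"
  have T0: "0 \<le> T" using pow_val[OF g_carrier[OF yc] i] T_def by simp
  have "g x i \<le> T + 1 - a"
  proof (rule g_least[OF i])
    fix j assume j: "j \<in> I"
    have "std_mult a (std_mult (R i j) (x j)) \<le> T" using g_upper[OF yc i j] y_eq[OF j] T_def by simp
    then show "std_mult (R i j) (x j) \<le> T + 1 - a"
      unfolding std_mult_alt using a T0 by (auto simp: max_def split: if_splits)
  qed
  then show "std_mult a (g x i) \<le> g y i" unfolding std_mult_alt using T0 T_def a by simp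
qed

lemma g_const: "qunit r \<Longrightarrow> x \<in> pow_carrier I \<Longrightarrow>
  mv_mult (pow_plus I) (pow_neg I) (pow_const I r) (g x) = g (mv_mult (pow_plus I) (pow_neg I) (pow_const I r) x)"
proof
  fix i assume r: "qunit r" and x: "x \<in> pow_carrier I"
  have a: "0 \<le> real_of_rat r" "real_of_rat r \<le> 1" using r unfolding qunit_def by auto
  have eq: "mv_mult (pow_plus I) (pow_neg I) (pow_const I r) x =
      (\<lambda>j. if j \<in> I then std_mult (real_of_rat r) (x j) else 0)"
    unfolding pow_mult pow_const_def by (auto simp: fun_eq_iff)
  show "mv_mult (pow_plus I) (pow_neg I) (pow_const I r) (g x) i =
      g (mv_mult (pow_plus I) (pow_neg I) (pow_const I r) x) i"
    unfolding eq using g_scale[OF a x] by (cases "i \<in> I") (auto simp: pow_mult pow_const_def g_out)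
qed

lemma monadic_power: "monadic_pavelka (pow_carrier I) (pow_plus I) (pow_neg I) (pow_const I) g"
  unfolding monadic_pavelka_def
proof (intro conjI ballI allI impI)
  show "pavelka_algebra (pow_carrier I) (pow_plus I) (pow_neg I) (pow_const I)" by (rule power_pavelka)
next
  fix x assume "x \<in> pow_carrier I" then show "g x \<in> pow_carrier I" by (rule g_carrier)
next
  fix x y assume x: "x \<in> pow_carrier I" and y: "y \<in> pow_carrier I"
    and "mv_le (pow_plus I) (pow_neg I) (pow_const I 0) x y"
  then have "\<forall>i\<in>I. x i \<le> y i" using pow_le by blast
  then show "mv_le (pow_plus I) (pow_neg I) (pow_const I 0) (g x) (g y)"
    using pow_le[OF g_carrier[OF x] g_carrier[OF y]] g_mono[OF x y] by blast
next
  fix x assume x: "x \<in> pow_carrier I"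
  show "mv_le (pow_plus I) (pow_neg I) (pow_const I 0) x (g x)"
    using pow_le[OF x g_carrier[OF x]] g_ext[OF x] by blast
  show "g (g x) = g x" using g_idem[OF x] .
  show "g (pow_neg I (g x)) = pow_neg I (g x)" using g_ng[OF x] .
next
  fix x r assume "x \<in> pow_carrier I" "qunit r"
  then show "mv_mult (pow_plus I) (pow_neg I) (pow_const I r) (g x) = g (mv_mult (pow_plus I) (pow_neg I) (pow_const I r) x)"
    using g_const by blast
qed

end

section \<open>Monadic Pavelka algebras\<close>

locale monadic_pav = pav_alg +
  fixes ex :: "'a \<Rightarrow> 'a"
  assumes mon: "monadic_pavelka A pl ng c ex"
begin

lemma exA[simp]: "x \<in> A \<Longrightarrow> ex x \<in> A" using mon unfolding monadic_pavelka_def by blast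
lemma ex_mono: "x \<in> A \<Longrightarrow> y \<in> A \<Longrightarrow> le x y \<Longrightarrow> le (ex x) (ex y)"
  using mon unfolding monadic_pavelka_def le_mv by blast
lemma ex_ext: "x \<in> A \<Longrightarrow> le x (ex x)"
  using mon unfolding monadic_pavelka_def le_mv by blast
lemma ex_idem[simp]: "x \<in> A \<Longrightarrow> ex (ex x) = ex x"
  using mon unfolding monadic_pavelka_def by blast
lemma ex_ng: "x \<in> A \<Longrightarrow> ex (ng (ex x)) = ng (ex x)"
  using mon unfolding monadic_pavelka_def by blast
lemma ex_c: "x \<in> A \<Longrightarrow> qunit r \<Longrightarrow> mult (c r) (ex x) = ex (mult (c r) x)"
  using mon unfolding monadic_pavelka_def mult_mv by blast

definition Closed :: "'a set" where "Closed = {e \<in> A. ex e = e}"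

lemma Closed_A: "e \<in> Closed \<Longrightarrow> e \<in> A" unfolding Closed_def by blast
lemma Closed_ex: "e \<in> Closed \<Longrightarrow> ex e = e" unfolding Closed_def by blast
lemma ex_Closed: "y \<in> A \<Longrightarrow> ex y \<in> Closed" unfolding Closed_def by simp

lemma Closed_ng: "e \<in> Closed \<Longrightarrow> ng e \<in> Closed"
proof -
  assume e: "e \<in> Closed"
  have "ex (ng (ex e)) = ng (ex e)" using ex_ng Closed_A[OF e] by blast
  then show ?thesis using e unfolding Closed_def by simp
qed

lemma Closed_multc: "e \<in> Closed \<Longrightarrow> qunit r \<Longrightarrow> mult (c r) e \<in> Closed"
proof -
  assume e: "e \<in> Closed" and r: "qunit r"
  have "mult (c r) (ex e) = ex (mult (c r) e)" using ex_c Closed_A[OF e] r by blast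
  then show ?thesis using e r Closed_A[OF e] unfolding Closed_def by simp
qed

lemma Closed_meet: "e1 \<in> Closed \<Longrightarrow> e2 \<in> Closed \<Longrightarrow> meet e1 e2 \<in> Closed"
proof -
  assume e: "e1 \<in> Closed" "e2 \<in> Closed"
  have A: "e1 \<in> A" "e2 \<in> A" using e Closed_A by auto
  have m: "meet e1 e2 \<in> A" using A by simp
  have "le (ex (meet e1 e2)) (ex e1)" using ex_mono[OF m A(1) meet_lb1[OF A]] .
  moreover have "le (ex (meet e1 e2)) (ex e2)" using ex_mono[OF m A(2) meet_lb2[OF A]] .
  ultimately have "le (ex (meet e1 e2)) (meet e1 e2)" using meet_greatest[OF A] e Closed_ex m by simp
  then have "ex (meet e1 e2) = meet e1 e2" using le_antisym ex_ext[OF m] m by simp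
  then show ?thesis using m unfolding Closed_def by simp
qed

lemma Closed_join: "e1 \<in> Closed \<Longrightarrow> e2 \<in> Closed \<Longrightarrow> join e1 e2 \<in> Closed"
  using Closed_meet Closed_ng join_meet Closed_A by metis

lemma Closed_plc: "e \<in> Closed \<Longrightarrow> qunit q \<Longrightarrow> e \<oplus> c q \<in> Closed"
proof -
  assume e: "e \<in> Closed" and q: "qunit q"
  have q1: "qunit (1 - q)" using q by (auto simp: qunit_def)
  have eA: "e \<in> A" using Closed_A[OF e] .
  have "ng (c (1 - q)) = c q" using c_ng[OF q1] by simp
  then have "mult (c (1 - q)) (ng e) = ng (c q \<oplus> e)" using eA by (simp add: mult_def)
  then have "ng (mult (c (1 - q)) (ng e)) = e \<oplus> c q" using eA q by (simp add: comm)
  moreover have "ng (mult (c (1 - q)) (ng e)) \<in> Closed" using Closed_ng Closed_multc[OF Closed_ng[OF e] q1] by blast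
  ultimately show ?thesis by simp
qed

lemma Closed_difc: "e \<in> Closed \<Longrightarrow> qunit q \<Longrightarrow> dif e (c q) \<in> Closed"
proof -
  assume e: "e \<in> Closed" and q: "qunit q"
  have "ng e \<oplus> c q \<in> Closed" using Closed_plc[OF Closed_ng[OF e] q] .
  then show ?thesis unfolding dif_def using Closed_ng by blast
qed

lemma Closed_c0: "c 0 \<in> Closed"
proof -
  have m: "\<And>x. x \<in> A \<Longrightarrow> mult (c 0) x = c 0" by (simp add: mult_def c1[symmetric])
  have "mult (c 0) (ex (c 0)) = ex (mult (c 0) (c 0))" using ex_c[of "c 0" 0] by simp
  then have "ex (c 0) = c 0" using m by simp
  then show ?thesis unfolding Closed_def by simp
qed

end

section \<open>The representation of semisimple monadic Pavelka algebras\<close>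

locale semisimple_monadic = monadic_pav +
  assumes semi: "mv_semisimple A pl ng (c 0)"
begin

definition Homs :: "('a \<Rightarrow> real) set" where
  "Homs = {k. std_hom k \<and> (\<forall>y. y \<notin> A \<longrightarrow> k y = 0)}"
definition embed :: "'a \<Rightarrow> ('a \<Rightarrow> real) \<Rightarrow> real" where
  "embed x = (\<lambda>k. if k \<in> Homs then k x else 0)"
definition restrict_hom :: "('a \<Rightarrow> real) \<Rightarrow> 'a \<Rightarrow> real" where
  "restrict_hom k = (\<lambda>y. if y \<in> A then k y else 0)"

lemma Homs_std_hom: "k \<in> Homs \<Longrightarrow> std_hom k" unfolding Homs_def by blast

lemma restrict_hom_Homs: "std_hom k \<Longrightarrow> restrict_hom k \<in> Homs"
proof -
  assume k: "std_hom k"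
  have "std_hom (restrict_hom k)" unfolding std_hom_def restrict_hom_def
    using std_hom_range[OF k] std_hom_pl[OF k] std_hom_ng[OF k] std_hom_c[OF k] by simp
  then show ?thesis unfolding Homs_def restrict_hom_def by simp
qed

lemma restrict_hom_val: "y \<in> A \<Longrightarrow> restrict_hom k y = k y" unfolding restrict_hom_def by simp

lemma homs_separate: "x \<in> A \<Longrightarrow> y \<in> A \<Longrightarrow> x \<noteq> y \<Longrightarrow> \<exists>k\<in>Homs. k x \<noteq> k y"
proof -
  assume h: "x \<in> A" "y \<in> A" "x \<noteq> y"
  obtain \<Theta> where T: "\<forall>\<theta>\<in>\<Theta>. mv_congruence A pl ng \<theta> \<and>
               simple_mv (A // \<theta>) (quot_plus \<theta> pl) (quot_neg \<theta> ng) (\<theta> `` {c 0})"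
    and sepT: "\<forall>x\<in>A. \<forall>y\<in>A. (\<forall>\<theta>\<in>\<Theta>. (x, y) \<in> \<theta>) \<longrightarrow> x = y"
    using semi unfolding mv_semisimple_def by blast
  obtain \<theta> where th: "\<theta> \<in> \<Theta>" "(x, y) \<notin> \<theta>" using sepT h by blast
  have C: "mv_congruence A pl ng \<theta>" using T th by blast
  have M: "max_ideal (cong_ker \<theta>)" using cong_ker_max[OF C] T th by blast
  define k where "k = valuation (cong_ker \<theta>)"
  have sk: "std_hom k" using valuation_std_hom[OF M] k_def by simp
  have "dif x y \<notin> cong_ker \<theta> \<or> dif y x \<notin> cong_ker \<theta>" using cong_ker_sep[OF C h(1,2)] th by blast
  then have "k (dif x y) \<noteq> 0 \<or> k (dif y x) \<noteq> 0" using valuation_zero_iff[OF M] h k_def by simp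
  then have "k x \<noteq> k y" using std_hom_dif[OF sk] h by auto
  then show ?thesis using restrict_hom_Homs[OF sk] restrict_hom_val h by (intro bexI[of _ "restrict_hom k"]) auto
qed

lemma embed_inj: "inj_on embed A"
proof (rule inj_onI)
  fix x y assume h: "x \<in> A" "y \<in> A" "embed x = embed y"
  show "x = y"
  proof (rule ccontr)
    assume "x \<noteq> y"
    then obtain k where k: "k \<in> Homs" "k x \<noteq> k y" using homs_separate h by blast
    have "embed x k = embed y k" using h by simp
    then show False using k unfolding embed_def by simp
  qed
qed

lemma le_if_homs_le: "x \<in> A \<Longrightarrow> y \<in> A \<Longrightarrow> (\<And>k. k \<in> Homs \<Longrightarrow> k x \<le> k y) \<Longrightarrow> le x y"
proof -
  assume h: "x \<in> A" "y \<in> A" and kk: "\<And>k. k \<in> Homs \<Longrightarrow> k x \<le> k y"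
  have "embed (ng x \<oplus> y) = embed (ng (c 0))"
  proof
    fix k show "embed (ng x \<oplus> y) k = embed (ng (c 0)) k"
    proof (cases "k \<in> Homs")
      case True
      then have sk: "std_hom k" using Homs_std_hom by blast
      have "k (ng x \<oplus> y) = min (1 - k x + k y) 1" using std_hom_pl[OF sk] std_hom_ng[OF sk] h by simp
      also have "\<dots> = 1" using kk[OF True] by simp
      also have "1 = k (ng (c 0))" using std_hom_ng[OF sk] std_hom_c[OF sk q0] by simp
      finally show ?thesis unfolding embed_def using True by simp
    qed (simp add: embed_def)
  qed
  then have "ng x \<oplus> y = ng (c 0)" using embed_inj h unfolding inj_on_def by simp
  then show ?thesis unfolding le_def .
qed

end

context monadic_pav
begin

text \<open>Fix h, x and a rational s below h(\<exists>x).
  With w = \<not>x \<oplus> s and d = s \<ominus> x, every closed element e gives the generator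
  (e \<cdot> w) \<or> d; the ideal generated by the generators of closed elements killed by h is
  proper (witness_ideal_proper), and any homomorphism killing it satisfies the two
  estimates of witness_bound.\<close>
definition witness_gen :: "'a \<Rightarrow> rat \<Rightarrow> 'a \<Rightarrow> 'a" where
  "witness_gen x s e = join (mult e (ng x \<oplus> c s)) (dif (c s) x)"

definition witness_ideal :: "('a \<Rightarrow> real) \<Rightarrow> 'a \<Rightarrow> rat \<Rightarrow> 'a set" where
  "witness_ideal h x s = {v \<in> A. \<exists>e\<in>Closed. h e = 0 \<and> (\<exists>n. le v (nsum n (witness_gen x s e)))}"

lemma witness_genA[simp]: "x \<in> A \<Longrightarrow> qunit s \<Longrightarrow> e \<in> A \<Longrightarrow> witness_gen x s e \<in> A"
  by (simp add: witness_gen_def)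

lemma witness_gen_mono:
  "x \<in> A \<Longrightarrow> qunit s \<Longrightarrow> e \<in> A \<Longrightarrow> e' \<in> A \<Longrightarrow> le e e' \<Longrightarrow>
   le (witness_gen x s e) (witness_gen x s e')"
  unfolding witness_gen_def by (simp add: join_mono mv_mult_mono)

lemma witness_idealI:
  "x \<in> A \<Longrightarrow> qunit s \<Longrightarrow> v \<in> A \<Longrightarrow> e \<in> Closed \<Longrightarrow> h e = 0 \<Longrightarrow> le v (witness_gen x s e) \<Longrightarrow> v \<in> witness_ideal h x s"
  unfolding witness_ideal_def using Closed_A by (intro CollectI conjI bexI[of _ e] exI[of _ 1]) auto

lemma witness_ideal_is_ideal:
  assumes h: "std_hom h" and x: "x \<in> A" and s: "qunit s"
  shows "mv_ideal A pl ng (c 0) (witness_ideal h x s)"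
  unfolding ideal_iff
proof (intro conjI ballI impI)
  show "witness_ideal h x s \<subseteq> A" unfolding witness_ideal_def by blast
  show "c 0 \<in> witness_ideal h x s"
    using witness_idealI[OF x s _ Closed_c0] std_hom_c[OF h q0] x s by simp
next
  fix u v assume "u \<in> witness_ideal h x s" "v \<in> witness_ideal h x s"
  then obtain e1 n1 e2 n2
    where u: "u \<in> A" "e1 \<in> Closed" "h e1 = 0" "le u (nsum n1 (witness_gen x s e1))"
      and v: "v \<in> A" "e2 \<in> Closed" "h e2 = 0" "le v (nsum n2 (witness_gen x s e2))"
    unfolding witness_ideal_def by blast
  have eA: "e1 \<in> A" "e2 \<in> A" using u v Closed_A by auto
  define e where "e = join e1 e2"
  have e: "e \<in> Closed" "e \<in> A" "h e = 0"
    using Closed_join[OF u(2) v(2)] std_hom_join[OF h eA] u v eA by (auto simp: e_def)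
  have "le (nsum n1 (witness_gen x s e1)) (nsum n1 (witness_gen x s e))"
    using nsum_mono witness_gen_mono join_ub1[OF eA] eA e x s by (simp add: e_def)
  then have 1: "le u (nsum n1 (witness_gen x s e))" using le_trans[OF u(1) _ _ u(4)] x s eA e(2) by simp
  have "le (nsum n2 (witness_gen x s e2)) (nsum n2 (witness_gen x s e))"
    using nsum_mono witness_gen_mono join_ub2[OF eA] eA e x s by (simp add: e_def)
  then have 2: "le v (nsum n2 (witness_gen x s e))" using le_trans[OF v(1) _ _ v(4)] x s eA e(2) by simp
  have "le (u \<oplus> v) (nsum n1 (witness_gen x s e) \<oplus> nsum n2 (witness_gen x s e))"
    using pl_mono2 1 2 u v e x s by simp
  then have "le (u \<oplus> v) (nsum (n1 + n2) (witness_gen x s e))" using nsum_add e x s by simp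
  then show "u \<oplus> v \<in> witness_ideal h x s" unfolding witness_ideal_def using u v e by auto
next
  fix u v assume "u \<in> witness_ideal h x s" "v \<in> A" "le v u"
  then obtain e n where u: "u \<in> A" "e \<in> Closed" "h e = 0" "le u (nsum n (witness_gen x s e))"
    unfolding witness_ideal_def by blast
  have "le v (nsum n (witness_gen x s e))"
    using le_trans[of v u] u \<open>le v u\<close> \<open>v \<in> A\<close> Closed_A x s by simp
  then show "v \<in> witness_ideal h x s" unfolding witness_ideal_def using u \<open>v \<in> A\<close> by blast
qed

lemma witness_gen_support:
  assumes k: "std_hom k" and x: "x \<in> A" and s: "qunit s" and e: "e \<in> A"
    and pos: "k (witness_gen x s e) \<noteq> 0"
  shows "k x \<le> k e + real_of_rat s"
proof (rule ccontr)
  assume "\<not> k x \<le> k e + real_of_rat s"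
  then have lt: "k e + real_of_rat s < k x" by simp
  have "k (witness_gen x s e) = max (max (k e + min (1 - k x + real_of_rat s) 1 - 1) 0) (max (real_of_rat s - k x) 0)"
    unfolding witness_gen_def using x s e
    by (simp add: std_hom_join[OF k] std_hom_mult[OF k] std_hom_dif[OF k] std_hom_pl[OF k]
        std_hom_ng[OF k] std_hom_c[OF k])
  also have "\<dots> = 0" using lt std_hom_range[OF k e] std_hom_range[OF k x] by (simp add: max_def min_def)
  finally show False using pos by simp
qed

text \<open>A homomorphism k killing the witness ideal of (h, x, s) satisfies s \<le> k x, because
  s \<ominus> x is a generator.\<close>
lemma witness_bound_at:
  assumes k: "std_hom k" and kill: "\<And>v. v \<in> witness_ideal h x s \<Longrightarrow> k v = 0"
    and h: "std_hom h" and x: "x \<in> A" and s: "qunit s"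
  shows "real_of_rat s \<le> k x"
proof -
  have "dif (c s) x \<in> witness_ideal h x s"
    using witness_idealI[OF x s _ Closed_c0] std_hom_c[OF h q0] join_ub2 x s by (simp add: witness_gen_def)
  then have "k (dif (c s) x) = 0" using kill by blast
  moreover have "k (dif (c s) x) = max (real_of_rat s - k x) 0"
    using std_hom_dif[OF k] std_hom_c[OF k s] x s by simp
  ultimately show ?thesis by (simp add: max_def split: if_splits)
qed

text \<open>Such a k also satisfies k(\<exists>y) - k x + s \<le> h(\<exists>y) for every y: for each rational
  q \<ge> h(\<exists>y) the closed element (\<exists>y) \<ominus> q is killed by h, so k kills its generator.\<close>
lemma witness_bound:
  assumes k: "std_hom k" and kill: "\<And>v. v \<in> witness_ideal h x s \<Longrightarrow> k v = 0"
    and h: "std_hom h" and x: "x \<in> A" and s: "qunit s" and y: "y \<in> A"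
  shows "k (ex y) - k x + real_of_rat s \<le> h (ex y)"
proof (rule le_if_below_rational_bounds)
  have eyA: "ex y \<in> A" using y by simp
  show "0 \<le> h (ex y)" "h (ex y) \<le> 1" using std_hom_range[OF h eyA] by auto
  fix q assume q: "qunit q" "h (ex y) \<le> real_of_rat q"
  define w where "w = ng x \<oplus> c s"
  have wA: "w \<in> A" using x s by (simp add: w_def)
  have Sk: "real_of_rat s \<le> k x" using witness_bound_at[OF k kill h x s] by blast
  have kw: "k w = 1 - k x + real_of_rat s"
    unfolding w_def using std_hom_pl[OF k] std_hom_ng[OF k] std_hom_c[OF k s] x s Sk
    by (simp add: min_def)
  define e where "e = dif (ex y) (c q)"
  have eC: "e \<in> Closed" using Closed_difc[OF ex_Closed[OF y] q(1)] e_def by simp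
  have eA: "e \<in> A" using Closed_A[OF eC] .
  have "h e = 0" unfolding e_def using std_hom_dif[OF h] std_hom_c[OF h q(1)] eyA q by simp
  then have "mult e w \<in> witness_ideal h x s"
    using witness_idealI[OF x s _ eC] join_ub1 eA wA x s by (simp add: witness_gen_def w_def)
  then have "k (mult e w) = 0" using kill by simp
  moreover have "k (mult e w) = max (k e + k w - 1) 0" using std_hom_mult[OF k eA wA] .
  moreover have "k e = max (k (ex y) - real_of_rat q) 0"
    unfolding e_def using std_hom_dif[OF k] std_hom_c[OF k q(1)] eyA q by simp
  ultimately have "max (max (k (ex y) - real_of_rat q) 0 + (1 - k x + real_of_rat s) - 1) 0 = 0"
    using kw by simp
  then show "k (ex y) - k x + real_of_rat s \<le> real_of_rat q"
    using Sk by (simp add: max_def split: if_splits)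
qed

end

context semisimple_monadic
begin

text \<open>The witness ideal is proper as soon as s < h(\<exists>x).  Otherwise x \<le> e \<oplus> s in every
  homomorphism, hence in A (semisimplicity), hence \<exists>x \<le> e \<oplus> s since e \<oplus> s is closed, and
  h(\<exists>x) \<le> h e + s = s.\<close>
lemma witness_ideal_proper:
  assumes hH: "h \<in> Homs" and x: "x \<in> A" and s: "qunit s" and sh: "real_of_rat s < h (ex x)"
  shows "ng (c 0) \<notin> witness_ideal h x s"
proof
  have h: "std_hom h" using Homs_std_hom[OF hH] .
  assume "ng (c 0) \<in> witness_ideal h x s"
  then obtain e n where e: "e \<in> Closed" "h e = 0" "le (ng (c 0)) (nsum n (witness_gen x s e))"
    unfolding witness_ideal_def by blast
  have eA: "e \<in> A" using Closed_A[OF e(1)] .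
  have one: "nsum n (witness_gen x s e) = ng (c 0)" using e le_one_iff eA x s by simp
  have "\<And>k. k \<in> Homs \<Longrightarrow> k x \<le> k (e \<oplus> c s)"
  proof -
    fix k assume "k \<in> Homs"
    then have k: "std_hom k" using Homs_std_hom by blast
    have "k (nsum n (witness_gen x s e)) = 1" using one std_hom_ng[OF k] std_hom_c[OF k q0] by simp
    then have "min (real n * k (witness_gen x s e)) 1 = 1" using std_hom_nsum[OF k] eA x s by simp
    then have "k (witness_gen x s e) \<noteq> 0" by auto
    then have "k x \<le> k e + real_of_rat s" using witness_gen_support[OF k x s eA] by simp
    then show "k x \<le> k (e \<oplus> c s)"
      using std_hom_pl[OF k] std_hom_c[OF k s] std_hom_range[OF k x] eA s by simp
  qed
  then have "le x (e \<oplus> c s)" using le_if_homs_le x eA s by simp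
  then have "le (ex x) (ex (e \<oplus> c s))" using ex_mono x eA s by simp
  then have "le (ex x) (e \<oplus> c s)" using Closed_ex[OF Closed_plc[OF e(1) s]] by simp
  then have "h (ex x) \<le> h (e \<oplus> c s)" using std_hom_le[OF h] x eA s by simp
  also have "h (e \<oplus> c s) = min (h e + real_of_rat s) 1" using std_hom_pl[OF h] std_hom_c[OF h s] eA s by simp
  finally show False using sh e(2) by simp
qed

text \<open>Witness homomorphism: for every rational s < h(\<exists>x) there is k \<in> Homs with
  s \<le> k x and k(\<exists>y) - k x + s \<le> h(\<exists>y) for all y: the valuation of a maximal ideal
  containing the witness ideal.\<close>
lemma witness_hom:
  assumes hH: "h \<in> Homs" and x: "x \<in> A" and s: "qunit s" and sh: "real_of_rat s < h (ex x)"
  shows "\<exists>k\<in>Homs. (\<forall>y\<in>A. k (ex y) - k x + real_of_rat s \<le> h (ex y)) \<and> real_of_rat s \<le> k x"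
proof -
  have h: "std_hom h" using Homs_std_hom[OF hH] .
  obtain M where M: "max_ideal M" "witness_ideal h x s \<subseteq> M"
    using max_ideal_exists[OF witness_ideal_is_ideal[OF h x s] witness_ideal_proper[OF hH x s sh]] by blast
  define k where "k = restrict_hom (valuation M)"
  have kH: "k \<in> Homs" using restrict_hom_Homs[OF valuation_std_hom[OF M(1)]] k_def by simp
  have "\<And>v. v \<in> witness_ideal h x s \<Longrightarrow> k v = 0"
    using M valuation_zero_iff[OF M(1)] restrict_hom_val unfolding k_def witness_ideal_def by auto
  then show ?thesis
    using witness_bound[OF Homs_std_hom[OF kH] _ h x s] witness_bound_at[OF Homs_std_hom[OF kH] _ h x s] kH
    by blast
qed

definition Rdir :: "('a \<Rightarrow> real) \<Rightarrow> ('a \<Rightarrow> real) \<Rightarrow> real" where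
  "Rdir h k = Inf ((\<lambda>y. std_imp (k y) (h (ex y))) ` A)"
definition Rhom :: "('a \<Rightarrow> real) \<Rightarrow> ('a \<Rightarrow> real) \<Rightarrow> real" where
  "Rhom h k = min (Rdir h k) (Rdir k h)"

lemma carrier_nonempty: "A \<noteq> {}" using cA[OF q0] by blast

lemma std_imp_range: "h \<in> Homs \<Longrightarrow> k \<in> Homs \<Longrightarrow> y \<in> A \<Longrightarrow> 0 \<le> std_imp (k y) (h (ex y)) \<and> std_imp (k y) (h (ex y)) \<le> 1"
  using std_hom_range[OF Homs_std_hom, of k y] std_hom_range[OF Homs_std_hom, of h "ex y"] unfolding std_imp_def by simp

lemma Rdir_le: "h \<in> Homs \<Longrightarrow> k \<in> Homs \<Longrightarrow> y \<in> A \<Longrightarrow> Rdir h k \<le> std_imp (k y) (h (ex y))"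
  unfolding Rdir_def
  by (rule cInf_lower) (auto intro!: bdd_belowI[of _ 0] dest: std_imp_range)

lemma Rdir_ge: "h \<in> Homs \<Longrightarrow> k \<in> Homs \<Longrightarrow> (\<And>y. y \<in> A \<Longrightarrow> t \<le> std_imp (k y) (h (ex y))) \<Longrightarrow> t \<le> Rdir h k"
  unfolding Rdir_def using carrier_nonempty by (intro cInf_greatest) auto

lemma Rdir_range: "h \<in> Homs \<Longrightarrow> k \<in> Homs \<Longrightarrow> 0 \<le> Rdir h k \<and> Rdir h k \<le> 1"
proof -
  assume hk: "h \<in> Homs" "k \<in> Homs"
  have "0 \<le> Rdir h k" using Rdir_ge[OF hk] std_imp_range[OF hk] by blast
  moreover have "Rdir h k \<le> 1" using Rdir_le[OF hk cA[OF q0]] std_imp_range[OF hk cA[OF q0]] by simp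
  ultimately show ?thesis by simp
qed

lemma Rhom_refl: "h \<in> Homs \<Longrightarrow> Rhom h h = 1"
proof -
  assume h: "h \<in> Homs"
  have "\<And>y. y \<in> A \<Longrightarrow> std_imp (h y) (h (ex y)) = 1"
    using std_hom_le[OF Homs_std_hom[OF h]] ex_ext unfolding std_imp_def by (simp add: min_def)
  then have "1 \<le> Rdir h h" using Rdir_ge[OF h h] by simp
  then have "Rdir h h = 1" using Rdir_range[OF h h] by simp
  then show ?thesis unfolding Rhom_def by simp
qed

text \<open>Transitivity of Rdir, using idempotence of \<exists>.\<close>
lemma Rdir_trans: "h \<in> Homs \<Longrightarrow> k \<in> Homs \<Longrightarrow> l \<in> Homs \<Longrightarrow> std_mult (Rdir h k) (Rdir k l) \<le> Rdir h l"
proof -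
  assume H: "h \<in> Homs" "k \<in> Homs" "l \<in> Homs"
  show ?thesis
  proof (rule Rdir_ge[OF H(1,3)])
    fix y assume y: "y \<in> A"
    have a: "Rdir h k \<le> std_imp (k (ex y)) (h (ex y))" using Rdir_le[OF H(1,2), of "ex y"] y by simp
    have b: "Rdir k l \<le> std_imp (l y) (k (ex y))" using Rdir_le[OF H(2,3) y] .
    have r: "0 \<le> Rdir h k" "0 \<le> Rdir k l" "Rdir h k \<le> 1" "Rdir k l \<le> 1" using Rdir_range H by auto
    have v: "0 \<le> l y" "l y \<le> 1" "0 \<le> h (ex y)" "h (ex y) \<le> 1" "0 \<le> k (ex y)" "k (ex y) \<le> 1"
      using std_hom_range[OF Homs_std_hom[OF H(3)] y] std_hom_range[OF Homs_std_hom[OF H(1)], of "ex y"]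
        std_hom_range[OF Homs_std_hom[OF H(2)], of "ex y"] y by auto
    show "std_mult (Rdir h k) (Rdir k l) \<le> std_imp (l y) (h (ex y))"
      using a b r v unfolding std_mult_alt std_imp_def by (simp add: min_def max_def split: if_splits)
  qed
qed

lemma Rhom_fuzzy_equiv: "fuzzy_equiv Homs Rhom"
  unfolding fuzzy_equiv_def
proof (intro conjI ballI)
  fix i j assume ij: "i \<in> Homs" "j \<in> Homs"
  show "0 \<le> Rhom i j" "Rhom i j \<le> 1" using Rdir_range[OF ij] Rdir_range[OF ij(2,1)] unfolding Rhom_def by auto
  show "Rhom i j = Rhom j i" unfolding Rhom_def by simp
next
  fix i assume "i \<in> Homs" then show "Rhom i i = 1" by (rule Rhom_refl)
next
  fix i j l assume H: "i \<in> Homs" "j \<in> Homs" "l \<in> Homs"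
  have 1: "std_mult (Rhom i j) (Rhom j l) \<le> Rdir i l"
    using std_mult_mono[of "Rhom i j" "Rdir i j" "Rhom j l" "Rdir j l"] Rdir_trans[OF H] unfolding Rhom_def by simp
  have "std_mult (Rhom i j) (Rhom j l) \<le> std_mult (Rdir l j) (Rdir j i)"
    using std_mult_mono[of "Rhom j l" "Rdir l j" "Rhom i j" "Rdir j i"] std_mult_comm unfolding Rhom_def by simp
  also have "\<dots> \<le> Rdir l i" using Rdir_trans[OF H(3,2,1)] .
  finally show "std_mult (Rhom i j) (Rhom j l) \<le> Rhom i l" using 1 unfolding Rhom_def by simp
qed

lemma Rhom_mult_le: "h \<in> Homs \<Longrightarrow> k \<in> Homs \<Longrightarrow> x \<in> A \<Longrightarrow> std_mult (Rhom h k) (k x) \<le> h (ex x)"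
proof -
  assume H: "h \<in> Homs" "k \<in> Homs" "x \<in> A"
  have "Rhom h k \<le> std_imp (k x) (h (ex x))" using Rdir_le[OF H] unfolding Rhom_def by simp
  moreover have "0 \<le> h (ex x)" "k x \<le> 1" using std_hom_range[OF Homs_std_hom[OF H(1)], of "ex x"]
    std_hom_range[OF Homs_std_hom[OF H(2)] H(3)] H by auto
  ultimately show ?thesis unfolding std_mult_alt std_imp_def by (simp add: min_def max_def split: if_splits)
qed

text \<open>The estimates produced by a witness homomorphism k give Rhom h k \<ge> 1 - k x + s, and hence
  Rhom h k \<cdot> k x \<ge> s.\<close>
lemma Rhom_witness_bound:
  assumes h: "h \<in> Homs" and k: "k \<in> Homs" and x: "x \<in> A"
    and main: "\<forall>y\<in>A. k (ex y) - k x + S \<le> h (ex y)" and Sk: "S \<le> k x"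
  shows "S \<le> std_mult (Rhom h k) (k x)"
proof -
  define \<rho> where "\<rho> = 1 - k x + S"
  have sk: "std_hom k" and sh: "std_hom h" using Homs_std_hom k h by auto
  have 1: "\<rho> \<le> Rdir h k"
  proof (rule Rdir_ge[OF h k])
    fix y assume y: "y \<in> A"
    have "k y \<le> k (ex y)" using std_hom_le[OF sk y _ ex_ext[OF y]] y by simp
    then show "\<rho> \<le> std_imp (k y) (h (ex y))" using main y Sk unfolding \<rho>_def std_imp_def by auto
  qed
  have 2: "\<rho> \<le> Rdir k h"
  proof (rule Rdir_ge[OF k h])
    fix y assume y: "y \<in> A"
    have eyA: "ex y \<in> A" using y by simp
    have "k (ex (ng (ex y))) - k x + S \<le> h (ex (ng (ex y)))" using main eyA by simp
    then have "1 - k (ex y) - k x + S \<le> 1 - h (ex y)"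
      using ex_ng[OF y] std_hom_ng[OF sk eyA] std_hom_ng[OF sh eyA] by simp
    moreover have "h y \<le> h (ex y)" using std_hom_le[OF sh y _ ex_ext[OF y]] y by simp
    ultimately show "\<rho> \<le> std_imp (h y) (k (ex y))" using Sk unfolding \<rho>_def std_imp_def by auto
  qed
  have "\<rho> \<le> Rhom h k" using 1 2 unfolding Rhom_def by simp
  then have "std_mult \<rho> (k x) \<le> std_mult (Rhom h k) (k x)" using std_mult_mono by simp
  moreover have "S \<le> std_mult \<rho> (k x)" unfolding std_mult_alt \<rho>_def by simp
  ultimately show ?thesis by linarith
qed

text \<open>The bound \<le> is
  Rhom_mult_le; for \<ge>, a rational s strictly between the supremum and h(\<exists>x) would have a
  witness homomorphism k with R h k \<cdot> k x \<ge> s.\<close>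
lemma embed_ex_sup:
  assumes h: "h \<in> Homs" and x: "x \<in> A"
  shows "(SUP k\<in>Homs. std_mult (Rhom h k) (embed x k)) = h (ex x)"
proof -
  have "(SUP k\<in>Homs. std_mult (Rhom h k) (embed x k)) = (SUP k\<in>Homs. std_mult (Rhom h k) (k x))"
    unfolding embed_def by (rule SUP_cong) auto
  also have "\<dots> = h (ex x)"
  proof (rule antisym)
    show "(SUP k\<in>Homs. std_mult (Rhom h k) (k x)) \<le> h (ex x)"
      using h Rhom_mult_le[OF h _ x] by (intro cSUP_least) auto
  next
    define \<Sigma> where "\<Sigma> = (SUP k\<in>Homs. std_mult (Rhom h k) (k x))"
    have bdd: "bdd_above ((\<lambda>k. std_mult (Rhom h k) (k x)) ` Homs)"
      using Rhom_mult_le[OF h _ x] by (intro bdd_aboveI[of _ "h (ex x)"]) auto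
    have up: "\<And>k. k \<in> Homs \<Longrightarrow> std_mult (Rhom h k) (k x) \<le> \<Sigma>"
      unfolding \<Sigma>_def using bdd by (rule cSUP_upper2) auto
    have \<Sigma>0: "0 \<le> \<Sigma>" using up[OF h] std_mult_nonneg order_trans by blast
    show "h (ex x) \<le> \<Sigma>"
    proof (rule ccontr)
      assume "\<not> h (ex x) \<le> \<Sigma>"
      then obtain s where s: "\<Sigma> < real_of_rat s" "real_of_rat s < h (ex x)"
        using of_rat_dense by (meson not_le)
      have "h (ex x) \<le> 1" using std_hom_range[OF Homs_std_hom[OF h], of "ex x"] x by simp
      then have qs: "qunit s" using s \<Sigma>0 by (intro qunit_of_rat) linarith+
      obtain k where k: "k \<in> Homs" and "\<forall>y\<in>A. k (ex y) - k x + real_of_rat s \<le> h (ex y)"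
        and "real_of_rat s \<le> k x" using witness_hom[OF h x qs s(2)] by blast
      then have "real_of_rat s \<le> std_mult (Rhom h k) (k x)" using Rhom_witness_bound[OF h k x] by blast
      then show False using up[OF k] s(1) by simp
    qed
  qed
  finally show ?thesis .
qed

lemma Homs_range: "k \<in> Homs \<Longrightarrow> x \<in> A \<Longrightarrow> 0 \<le> k x \<and> k x \<le> 1" using std_hom_range[OF Homs_std_hom] by blast
lemma Homs_ng: "k \<in> Homs \<Longrightarrow> x \<in> A \<Longrightarrow> k (ng x) = 1 - k x" using std_hom_ng[OF Homs_std_hom] by blast
lemma Homs_pl: "k \<in> Homs \<Longrightarrow> x \<in> A \<Longrightarrow> y \<in> A \<Longrightarrow> k (x \<oplus> y) = min (k x + k y) 1" using std_hom_pl[OF Homs_std_hom] by blast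
lemma Homs_c: "k \<in> Homs \<Longrightarrow> qunit r \<Longrightarrow> k (c r) = real_of_rat r" using std_hom_c[OF Homs_std_hom] by blast

lemma embed_hom: "pavelka_hom A pl ng c (pow_carrier Homs) (pow_plus Homs) (pow_neg Homs) (pow_const Homs) embed"
  unfolding pavelka_hom_def
proof (intro conjI ballI allI impI)
  fix x assume x: "x \<in> A"
  show "embed x \<in> pow_carrier Homs" unfolding pow_carrier_def embed_def
    using Homs_range x by auto
  show "embed (ng x) = pow_neg Homs (embed x)" unfolding pow_neg_def embed_def
    using Homs_ng x by auto
next
  fix x y assume x: "x \<in> A" and y: "y \<in> A"
  show "embed (x \<oplus> y) = pow_plus Homs (embed x) (embed y)" unfolding pow_plus_def embed_def
    using Homs_pl x y by auto
next
  fix r assume r: "qunit r"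
  show "embed (c r) = pow_const Homs r" unfolding pow_const_def embed_def
    using Homs_c r by auto
qed

lemma representation: "\<exists>(I :: ('a \<Rightarrow> real) set) R e.
               fuzzy_equiv I R \<and>
               pavelka_hom A pl ng c (pow_carrier I) (pow_plus I) (pow_neg I) (pow_const I) e \<and>
               inj_on e A \<and>
               (\<forall>x\<in>A. e (ex x) = g_R I R (e x))"
proof (intro exI conjI)
  show "fuzzy_equiv Homs Rhom" by (rule Rhom_fuzzy_equiv)
  show "pavelka_hom A pl ng c (pow_carrier Homs) (pow_plus Homs) (pow_neg Homs) (pow_const Homs) embed" by (rule embed_hom)
  show "inj_on embed A" by (rule embed_inj)
  show "\<forall>x\<in>A. embed (ex x) = g_R Homs Rhom (embed x)"
  proof
    fix x assume x: "x \<in> A"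
    show "embed (ex x) = g_R Homs Rhom (embed x)"
    proof
      fix h show "embed (ex x) h = g_R Homs Rhom (embed x) h"
        unfolding g_R_def using embed_ex_sup[OF _ x] by (simp add: embed_def)
    qed
  qed
qed

end

theorem theorem15:
  shows "(\<forall>(I :: 'i set) R. fuzzy_equiv I R \<longrightarrow>
            monadic_pavelka (pow_carrier I) (pow_plus I) (pow_neg I) (pow_const I) (g_R I R))
       \<and> (\<forall>(A :: 'a set) pl ng c ex.
            monadic_pavelka A pl ng c ex \<and> mv_semisimple A pl ng (c 0) \<longrightarrow>
            (\<exists>(I :: ('a \<Rightarrow> real) set) R e.
               fuzzy_equiv I R \<and>
               pavelka_hom A pl ng c (pow_carrier I) (pow_plus I) (pow_neg I) (pow_const I) e \<and>
               inj_on e A \<and>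
               (\<forall>x\<in>A. e (ex x) = g_R I R (e x))))"
proof (intro conjI allI impI)
  fix I :: "'i set" and R assume "fuzzy_equiv I R"
  then interpret fuzzy_equivalence I R by unfold_locales
  show "monadic_pavelka (pow_carrier I) (pow_plus I) (pow_neg I) (pow_const I) (g_R I R)" by (rule monadic_power)
next
  fix A :: "'a set" and pl ng c ex
  assume h: "monadic_pavelka A pl ng c ex \<and> mv_semisimple A pl ng (c 0)"
  then have p: "pavelka_algebra A pl ng c" unfolding monadic_pavelka_def by blast
  interpret semisimple_monadic A pl ng c ex
    using h p by unfold_locales blast+
  show "\<exists>(I :: ('a \<Rightarrow> real) set) R e.
               fuzzy_equiv I R \<and>
               pavelka_hom A pl ng c (pow_carrier I) (pow_plus I) (pow_neg I) (pow_const I) e \<and>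
               inj_on e A \<and>
               (\<forall>x\<in>A. e (ex x) = g_R I R (e x))" by (rule representation)
qed

end
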